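(* Let $A$ be a commutative R$^*$-algebra and let $\widehat{A}$ be its norm completion (a commutative C$^*$-algebra). Then every projection of $\widehat{A}$ belongs to $A$. Consequently, if $K$ is a locally compact Hausdorff space with $\widehat{A}\cong C_0(K)$, then $K$ is zero-dimensional, and the generalized Boolean algebra of compact open subsets of $K$ is lattice isomorphic to $\mathcal{P}(A)$ (via the identification of projections in $C_0(K)$ with characteristic functions of compact open sets).
   Context: An R$^*$-algebra is a (not necessarily closed) $^*$-subalgebra $A$ of $B(H)$, $H$ a complex Hilbert space, such that every self-adjoint element of $A$ has finite spectrum; it is normed by the operator norm. $\mathcal{P}(A)$ is the lattice of projections $p=p^2=p^*$ in $A$ ordered by $p\le q$ iff $pq=p$. $C_0(K)$ is the C$^*$-algebra of continuous functions on $K$ vanishing at infinity. *)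

theory Defs
  imports "HOL-Analysis.Analysis"
begin

definition hnorm :: "('h \<Rightarrow> 'h \<Rightarrow> complex) \<Rightarrow> 'h \<Rightarrow> real" where
  "hnorm ip x = sqrt (Re (ip x x))"

definition complex_hilbert_space ::
  "(complex \<Rightarrow> 'h::ab_group_add \<Rightarrow> 'h) \<Rightarrow> ('h \<Rightarrow> 'h \<Rightarrow> complex) \<Rightarrow> bool" where
  "complex_hilbert_space sc ip \<longleftrightarrow>
     (\<forall>a x y. sc a (x + y) = sc a x + sc a y) \<and>
     (\<forall>a b x. sc (a + b) x = sc a x + sc b x) \<and>
     (\<forall>a b x. sc a (sc b x) = sc (a * b) x) \<and>
     (\<forall>x. sc 1 x = x) \<and>
     (\<forall>x y z. ip (x + y) z = ip x z + ip y z) \<and>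
     (\<forall>a x y. ip (sc a x) y = a * ip x y) \<and>
     (\<forall>x y. ip y x = cnj (ip x y)) \<and>
     (\<forall>x. Im (ip x x) = 0 \<and> Re (ip x x) \<ge> 0) \<and>
     (\<forall>x. ip x x = 0 \<longrightarrow> x = 0) \<and>
     (\<forall>X :: nat \<Rightarrow> 'h.
        (\<forall>e>0. \<exists>N. \<forall>m\<ge>N. \<forall>n\<ge>N. hnorm ip (X m - X n) < e) \<longrightarrow>
        (\<exists>L. (\<lambda>n. hnorm ip (X n - L)) \<longlonglongrightarrow> 0))"

definition bops ::
  "(complex \<Rightarrow> 'h::ab_group_add \<Rightarrow> 'h) \<Rightarrow> ('h \<Rightarrow> 'h \<Rightarrow> complex) \<Rightarrow> ('h \<Rightarrow> 'h) set" where
  "bops sc ip = {T. (\<forall>x y. T (x + y) = T x + T y) \<and> (\<forall>a x. T (sc a x) = sc a (T x)) \<and>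
                    (\<exists>C. \<forall>x. hnorm ip (T x) \<le> C * hnorm ip x)}"

definition opnorm :: "('h \<Rightarrow> 'h \<Rightarrow> complex) \<Rightarrow> ('h \<Rightarrow> 'h) \<Rightarrow> real" where
  "opnorm ip T = Sup {hnorm ip (T x) | x. hnorm ip x \<le> 1}"

definition adj :: "('h \<Rightarrow> 'h \<Rightarrow> complex) \<Rightarrow> ('h \<Rightarrow> 'h) \<Rightarrow> ('h \<Rightarrow> 'h)" where
  "adj ip T = (THE S. \<forall>x y. ip (T x) y = ip x (S y))"

definition op_spectrum ::
  "(complex \<Rightarrow> 'h::ab_group_add \<Rightarrow> 'h) \<Rightarrow> ('h \<Rightarrow> 'h \<Rightarrow> complex) \<Rightarrow> ('h \<Rightarrow> 'h) \<Rightarrow> complex set" where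
  "op_spectrum sc ip T = {l. \<not> (\<exists>S\<in>bops sc ip.
       (\<forall>x. S (T x - sc l x) = x) \<and> (\<forall>x. T (S x) - sc l (S x) = x))}"

definition star_subalgebra ::
  "(complex \<Rightarrow> 'h::ab_group_add \<Rightarrow> 'h) \<Rightarrow> ('h \<Rightarrow> 'h \<Rightarrow> complex) \<Rightarrow> ('h \<Rightarrow> 'h) set \<Rightarrow> bool" where
  "star_subalgebra sc ip A \<longleftrightarrow> A \<subseteq> bops sc ip \<and> (\<lambda>x. 0) \<in> A \<and>
     (\<forall>a\<in>A. \<forall>b\<in>A. (\<lambda>x. a x + b x) \<in> A) \<and>
     (\<forall>a\<in>A. \<forall>c. (\<lambda>x. sc c (a x)) \<in> A) \<and>
     (\<forall>a\<in>A. \<forall>b\<in>A. a \<circ> b \<in> A) \<and>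
     (\<forall>a\<in>A. adj ip a \<in> A)"

definition R_star_algebra ::
  "(complex \<Rightarrow> 'h::ab_group_add \<Rightarrow> 'h) \<Rightarrow> ('h \<Rightarrow> 'h \<Rightarrow> complex) \<Rightarrow> ('h \<Rightarrow> 'h) set \<Rightarrow> bool" where
  "R_star_algebra sc ip A \<longleftrightarrow> star_subalgebra sc ip A \<and>
     (\<forall>a\<in>A. adj ip a = a \<longrightarrow> finite (op_spectrum sc ip a))"

definition commutative_ops :: "('h \<Rightarrow> 'h) set \<Rightarrow> bool" where
  "commutative_ops A \<longleftrightarrow> (\<forall>a\<in>A. \<forall>b\<in>A. a \<circ> b = b \<circ> a)"

text \<open>The norm completion of A, realised as the operator-norm closure of A inside B(H).\<close>
definition norm_closure ::
  "(complex \<Rightarrow> 'h::ab_group_add \<Rightarrow> 'h) \<Rightarrow> ('h \<Rightarrow> 'h \<Rightarrow> complex) \<Rightarrow> ('h \<Rightarrow> 'h) set \<Rightarrow> ('h \<Rightarrow> 'h) set" where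
  "norm_closure sc ip A = {T\<in>bops sc ip. \<forall>e>0. \<exists>a\<in>A. opnorm ip (\<lambda>x. T x - a x) < e}"

definition is_projection :: "('h \<Rightarrow> 'h \<Rightarrow> complex) \<Rightarrow> ('h \<Rightarrow> 'h) \<Rightarrow> bool" where
  "is_projection ip p \<longleftrightarrow> p \<circ> p = p \<and> adj ip p = p"

definition projections ::
  "('h \<Rightarrow> 'h \<Rightarrow> complex) \<Rightarrow> ('h \<Rightarrow> 'h) set \<Rightarrow> ('h \<Rightarrow> 'h) set" where
  "projections ip A = {p\<in>A. is_projection ip p}"

definition proj_le :: "('h \<Rightarrow> 'h) \<Rightarrow> ('h \<Rightarrow> 'h) \<Rightarrow> bool" where
  "proj_le p q \<longleftrightarrow> p \<circ> q = p"

definition C0 :: "('k::topological_space \<Rightarrow> complex) set" where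
  "C0 = {f. continuous_on UNIV f \<and> (\<forall>e>0. compact {x. norm (f x) \<ge> e})}"

definition star_iso_onto_C0 ::
  "(complex \<Rightarrow> 'h::ab_group_add \<Rightarrow> 'h) \<Rightarrow> ('h \<Rightarrow> 'h \<Rightarrow> complex) \<Rightarrow> ('h \<Rightarrow> 'h) set
    \<Rightarrow> (('h \<Rightarrow> 'h) \<Rightarrow> ('k::topological_space \<Rightarrow> complex)) \<Rightarrow> bool" where
  "star_iso_onto_C0 sc ip B \<Phi> \<longleftrightarrow> bij_betw \<Phi> B C0 \<and>
     (\<forall>a\<in>B. \<forall>b\<in>B. \<Phi> (\<lambda>x. a x + b x) = (\<lambda>t. \<Phi> a t + \<Phi> b t)) \<and>
     (\<forall>a\<in>B. \<forall>c. \<Phi> (\<lambda>x. sc c (a x)) = (\<lambda>t. c * \<Phi> a t)) \<and>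
     (\<forall>a\<in>B. \<forall>b\<in>B. \<Phi> (a \<circ> b) = (\<lambda>t. \<Phi> a t * \<Phi> b t)) \<and>
     (\<forall>a\<in>B. \<Phi> (adj ip a) = (\<lambda>t. cnj (\<Phi> a t)))"

definition zero_dimensional_space :: "'k::topological_space itself \<Rightarrow> bool" where
  "zero_dimensional_space _ \<longleftrightarrow>
     (\<forall>U x. open (U::'k set) \<and> x \<in> U \<longrightarrow> (\<exists>V. open V \<and> closed V \<and> x \<in> V \<and> V \<subseteq> U))"

end

(* Let p be a projection in the closure of A and approximate it within 1/2 by a
   self-adjoint b in A. Since A is an R*-algebra, the spectrum S of b is finite and real,
   and the polynomial prod_{s in S + {0}} (X - s) annihilates b: its value at b is
   self-adjoint with no nonzero spectrum, whereas a nonzero self-adjoint operator T has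
   ||T|| or -||T|| in its spectrum. Hence polynomials in b only depend on their values on
   S + {0}, and interpolating the indicator function of (1/2, oo) yields a projection q,
   a polynomial in b without constant term, so q lies in A. It commutes with p, and
   comparing the quadratic form of b, which is within 1/2 of that of p, on the ranges and
   kernels of p and q shows p = q.

   A *-isomorphism Phi onto C_0(K) sends projections to idempotent functions, i.e. to
   indicators of compact open sets, and for self-adjoint T every nonzero value of Phi T
   lies in the spectrum of T (bump functions around the value give approximate
   eigenvectors). To separate a point x from the complement of an open set U, approximate
   a Urysohn function for x and U by Phi b with b self-adjoint in A: the nonzero values
   of Phi b lie in the finite spectrum of b, so {Phi b > 1/2} is a clopen neighbourhood
   of x inside U. *)

theory Submission
  imports Defs "HOL-Computational_Algebra.Fundamental_Theorem_Algebra"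
begin

locale hilbert_space =
  fixes sc :: "complex \<Rightarrow> 'h::ab_group_add \<Rightarrow> 'h" and ip :: "'h \<Rightarrow> 'h \<Rightarrow> complex"
  assumes hilbert: "complex_hilbert_space sc ip"
begin

abbreviation nm :: "'h \<Rightarrow> real" where "nm \<equiv> hnorm ip"

lemma scale_add_right: "sc a (x + y) = sc a x + sc a y"
  using hilbert unfolding complex_hilbert_space_def by meson
lemma scale_add_left: "sc (a + b) x = sc a x + sc b x"
  using hilbert unfolding complex_hilbert_space_def by meson
lemma scale_scale: "sc a (sc b x) = sc (a * b) x"
  using hilbert unfolding complex_hilbert_space_def by meson
lemma scale_one [simp]: "sc 1 x = x"
  using hilbert unfolding complex_hilbert_space_def by meson
lemma ip_add_left: "ip (x + y) z = ip x z + ip y z"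
  using hilbert unfolding complex_hilbert_space_def by meson
lemma ip_scale_left: "ip (sc a x) y = a * ip x y"
  using hilbert unfolding complex_hilbert_space_def by meson
lemma ip_cnj_commute: "ip y x = cnj (ip x y)"
  using hilbert unfolding complex_hilbert_space_def by meson
lemma ip_self_Im: "Im (ip x x) = 0"
  using hilbert unfolding complex_hilbert_space_def by meson
lemma ip_self_Re_nonneg: "Re (ip x x) \<ge> 0"
  using hilbert unfolding complex_hilbert_space_def by meson
lemma ip_self_eq_zero: "ip x x = 0 \<Longrightarrow> x = 0"
  using hilbert unfolding complex_hilbert_space_def by meson
lemma Cauchy_imp_convergent:
  "\<forall>e>0. \<exists>N. \<forall>m\<ge>N. \<forall>n\<ge>N. nm (X m - X n) < e \<Longrightarrow> \<exists>L. (\<lambda>n. nm (X n - L)) \<longlonglongrightarrow> 0"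
  using hilbert unfolding complex_hilbert_space_def by meson

lemma scale_zero_left [simp]: "sc 0 x = 0"
  using scale_add_left[of 0 0 x] by simp
lemma scale_zero_right [simp]: "sc a 0 = 0"
  using scale_add_right[of a 0 0] by simp
lemma scale_minus_right: "sc a (- x) = - sc a x"
  using scale_add_right[of a x "-x"] by (simp add: eq_neg_iff_add_eq_0 add.commute)
lemma scale_diff_right: "sc a (x - y) = sc a x - sc a y"
  using scale_add_right[of a x "-y"] by (simp add: scale_minus_right)
lemma scale_minus_left: "sc (- a) x = - sc a x"
  using scale_add_left[of a "-a" x] by (simp add: eq_neg_iff_add_eq_0 add.commute)
lemma scale_diff_left: "sc (a - b) x = sc a x - sc b x"
  using scale_add_left[of a "-b" x] by (simp add: scale_minus_left)
lemma scale_sum_right: "sc a (sum f S) = (\<Sum>i\<in>S. sc a (f i))"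
  by (induction S rule: infinite_finite_induct) (auto simp: scale_add_right)
lemma scale_two: "sc 2 x = x + x"
  using scale_add_left[of 1 1 x] by simp
lemma scale_half_double: "sc (1/2) (y + y) = y"
  using scale_two[of y] scale_scale[of "1/2" 2 y] by simp

lemma ip_zero_left [simp]: "ip 0 y = 0"
  using ip_add_left[of 0 0 y] by simp
lemma ip_minus_left: "ip (- x) y = - ip x y"
  using ip_add_left[of x "-x" y] by (simp add: eq_neg_iff_add_eq_0 add.commute)
lemma ip_diff_left: "ip (x - y) z = ip x z - ip y z"
  using ip_add_left[of x "-y" z] by (simp add: ip_minus_left)
lemma ip_add_right: "ip x (y + z) = ip x y + ip x z"
  by (metis complex_cnj_add ip_add_left ip_cnj_commute)
lemma ip_scale_right: "ip x (sc a y) = cnj a * ip x y"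
  by (metis complex_cnj_mult ip_scale_left ip_cnj_commute)
lemma ip_zero_right [simp]: "ip x 0 = 0"
  by (metis complex_cnj_zero ip_cnj_commute ip_zero_left)
lemma ip_minus_right: "ip x (- y) = - ip x y"
  by (metis complex_cnj_minus ip_minus_left ip_cnj_commute)
lemma ip_diff_right: "ip x (y - z) = ip x y - ip x z"
  using ip_add_right[of x y "-z"] by (simp add: ip_minus_right)

lemma ip_eqI: "(\<And>x. ip x u = ip x v) \<Longrightarrow> u = v"
proof -
  assume "\<And>x. ip x u = ip x v"
  then have "ip (u - v) (u - v) = 0" by (simp add: ip_diff_right)
  then show "u = v" using ip_self_eq_zero[of "u - v"] by simp
qed

lemma nm_nonneg [simp]: "nm x \<ge> 0"
  using ip_self_Re_nonneg[of x] by (simp add: hnorm_def)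
lemma nm_square: "nm x ^ 2 = Re (ip x x)"
  using ip_self_Re_nonneg[of x] by (simp add: hnorm_def)
lemma ip_self_nm: "ip x x = complex_of_real (nm x ^ 2)"
  using nm_square[of x] ip_self_Im[of x] by (simp add: complex_eq_iff)
lemma nm_eq_zero_iff [simp]: "nm x = 0 \<longleftrightarrow> x = 0"
  using ip_self_nm[of x] ip_self_eq_zero[of x] by auto
lemma nm_zero [simp]: "nm 0 = 0"
  by simp
lemma nm_le_zero_iff [simp]: "nm x \<le> 0 \<longleftrightarrow> x = 0"
  using nm_nonneg[of x] nm_eq_zero_iff[of x] by linarith
lemma nm_pos: "x \<noteq> 0 \<Longrightarrow> nm x > 0"
  using nm_nonneg[of x] nm_eq_zero_iff[of x] by linarith

lemma nm_scale: "nm (sc a x) = cmod a * nm x"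
proof -
  have "cnj a * a = complex_of_real ((cmod a)\<^sup>2)"
    using complex_norm_square[of a] by (simp add: mult.commute)
  then have "ip (sc a x) (sc a x) = complex_of_real ((cmod a)\<^sup>2) * ip x x"
    by (simp add: ip_scale_left ip_scale_right mult.assoc[symmetric] del: of_real_power)
  then have "nm (sc a x) ^ 2 = (cmod a * nm x) ^ 2"
    by (simp add: nm_square power_mult_distrib del: of_real_power)
  then show ?thesis by (simp add: power2_eq_iff_nonneg)
qed

lemma nm_minus: "nm (- x) = nm x"
  using nm_scale[of "-1" x] by (simp add: scale_minus_left)
lemma nm_minus_commute: "nm (x - y) = nm (y - x)"
  by (metis minus_diff_eq nm_minus)

lemma nm_add_square: "nm (x + y) ^ 2 = nm x ^ 2 + 2 * Re (ip x y) + nm y ^ 2"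
proof -
  have "ip (x + y) (x + y) = ip x x + ip x y + cnj (ip x y) + ip y y"
    by (simp add: ip_add_left ip_add_right ip_cnj_commute[of x y])
  then show ?thesis by (simp add: nm_square)
qed

lemma nm_diff_square: "nm (x - y) ^ 2 = nm x ^ 2 - 2 * Re (ip x y) + nm y ^ 2"
  using nm_add_square[of x "- y"] by (simp add: ip_minus_right nm_minus)

lemma parallelogram: "nm (u + v) ^ 2 + nm (u - v) ^ 2 = 2 * nm u ^ 2 + 2 * nm v ^ 2"
  using nm_add_square[of u v] nm_diff_square[of u v] by simp

lemma nm_diff_projection_square:
  assumes "y \<noteq> 0"
  shows "nm (x - sc (ip x y / nm y ^ 2) y) ^ 2 = nm x ^ 2 - (cmod (ip x y))\<^sup>2 / nm y ^ 2"
proof -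
  have b: "nm y ^ 2 > 0" using assms nm_pos by simp
  have "ip x (sc (ip x y / nm y ^ 2) y) = (cmod (ip x y))\<^sup>2 / nm y ^ 2"
    using complex_norm_square[of "ip x y"]
    by (simp add: ip_scale_right mult.commute del: of_real_power)
  moreover have "nm (sc (ip x y / nm y ^ 2) y) ^ 2 = (cmod (ip x y))\<^sup>2 / nm y ^ 2"
  proof -
    have "cmod (ip x y / nm y ^ 2) = cmod (ip x y) / nm y ^ 2"
      by (simp add: norm_divide norm_power)
    then have "nm (sc (ip x y / nm y ^ 2) y) ^ 2 = (cmod (ip x y) / nm y ^ 2 * nm y) ^ 2"
      by (simp add: nm_scale)
    then show ?thesis using b by (simp add: power2_eq_square)
  qed
  ultimately show ?thesis
    by (simp add: nm_diff_square)
qed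

lemma cauchy_schwarz: "cmod (ip x y) \<le> nm x * nm y"
proof (cases "y = 0")
  case False
  have "0 \<le> nm (x - sc (ip x y / nm y ^ 2) y) ^ 2" by simp
  then have "(cmod (ip x y))\<^sup>2 / nm y ^ 2 \<le> nm x ^ 2"
    using nm_diff_projection_square[OF False, of x] by linarith
  moreover have "0 < nm y ^ 2" using False by simp
  ultimately have "(cmod (ip x y))\<^sup>2 \<le> (nm x * nm y)\<^sup>2"
    by (simp add: pos_divide_le_eq power_mult_distrib)
  then show ?thesis using power2_le_imp_le by fastforce
qed simp

lemma abs_Re_ip_le: "\<bar>Re (ip x y)\<bar> \<le> nm x * nm y"
  using cauchy_schwarz[of x y] abs_Re_le_cmod order_trans by blast

lemma nm_triangle: "nm (x + y) \<le> nm x + nm y"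
proof -
  have "nm (x + y) ^ 2 \<le> (nm x + nm y) ^ 2"
    using nm_add_square[of x y] abs_Re_ip_le[of x y] by (simp add: power2_eq_square algebra_simps)
  then show ?thesis using power2_le_imp_le by fastforce
qed

lemma nm_diff_le: "nm (x - y) \<le> nm x + nm y"
  using nm_triangle[of x "-y"] by (simp add: nm_minus)
lemma nm_reverse_triangle: "nm x - nm y \<le> nm (x - y)"
  using nm_triangle[of "x - y" y] by simp
lemma nm_diff_triangle: "nm (x - z) \<le> nm (x - y) + nm (y - z)"
  using nm_triangle[of "x - y" "y - z"] by simp

lemma nm_tendsto:
  assumes "(\<lambda>n. nm (X n - L)) \<longlonglongrightarrow> 0"
  shows "(\<lambda>n. nm (X n)) \<longlonglongrightarrow> nm L"
proof (rule metric_tendsto_imp_tendsto[OF assms always_eventually, rule_format])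
  fix n
  show "dist (nm (X n)) (nm L) \<le> dist (nm (X n - L)) 0"
    using nm_reverse_triangle[of "X n" L] nm_reverse_triangle[of L "X n"]
    by (simp add: dist_real_def nm_minus_commute[of L])
qed

lemma limit_unique:
  assumes "(\<lambda>n. nm (X n - L)) \<longlonglongrightarrow> 0" "(\<lambda>n. nm (X n - L')) \<longlonglongrightarrow> 0"
  shows "L = L'"
proof -
  have "nm (L - L') \<le> 0"
  proof (rule LIMSEQ_le_const[OF tendsto_add_zero[OF assms]], intro exI allI impI)
    fix n
    show "nm (L - L') \<le> nm (X n - L) + nm (X n - L')"
      using nm_diff_triangle[of L L' "X n"] nm_minus_commute[of L "X n"] by simp
  qed
  then show ?thesis by simp
qed

lemma convergent_imp_Cauchy:
  assumes "(\<lambda>n. nm (X n - L)) \<longlonglongrightarrow> 0"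
  shows "\<forall>e>0. \<exists>N. \<forall>m\<ge>N. \<forall>n\<ge>N. nm (X m - X n) < e"
proof (intro allI impI)
  fix e :: real assume "e > 0"
  then obtain N where N: "\<And>n. n \<ge> N \<Longrightarrow> nm (X n - L) < e / 2"
    using LIMSEQ_D[OF assms, of "e / 2"] by auto
  have "nm (X m - X n) < e" if "m \<ge> N" "n \<ge> N" for m n
    using nm_diff_triangle[of "X m" "X n" L] N[OF that(1)] N[OF that(2)] nm_minus_commute[of L "X n"]
    by linarith
  then show "\<exists>N. \<forall>m\<ge>N. \<forall>n\<ge>N. nm (X m - X n) < e" by blast
qed

lemma convergent_if_square_dist_le:
  assumes bound: "\<And>m n. nm (X m - X n) ^ 2 \<le> c / Suc m + c / Suc n"
  shows "\<exists>L. (\<lambda>n. nm (X n - L)) \<longlonglongrightarrow> 0"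
proof (rule Cauchy_imp_convergent, intro allI impI)
  fix e :: real assume e: "e > 0"
  obtain N :: nat where "2 * c / e\<^sup>2 < N"
    using reals_Archimedean2 by blast
  then have N: "2 * c / e\<^sup>2 < Suc N" by simp
  have "nm (X m - X n) < e" if "m \<ge> N" "n \<ge> N" for m n
  proof -
    have "0 \<le> 2 * c / Suc m" using bound[of m m] by simp
    then have c: "c \<ge> 0" by (simp add: zero_le_divide_iff)
    have "c / Suc m \<le> c / Suc N" "c / Suc n \<le> c / Suc N"
      using that c by (auto intro!: divide_left_mono)
    then have "nm (X m - X n) ^ 2 \<le> 2 * c / Suc N" using bound[of m n] by simp
    also have "\<dots> < e\<^sup>2" using N e by (simp add: field_simps)
    finally show ?thesis using e by (simp add: power_less_imp_less_base)
  qed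
  then show "\<exists>N. \<forall>m\<ge>N. \<forall>n\<ge>N. nm (X m - X n) < e" by blast
qed

end

section \<open>Orthogonal projections and the Riesz representation\<close>

context hilbert_space
begin

definition closed_subspace :: "'h set \<Rightarrow> bool" where
  "closed_subspace M \<longleftrightarrow> 0 \<in> M \<and> (\<forall>x\<in>M. \<forall>y\<in>M. x + y \<in> M) \<and> (\<forall>a. \<forall>x\<in>M. sc a x \<in> M) \<and>
     (\<forall>X L. (\<forall>n. X n \<in> M) \<and> (\<lambda>n. nm (X n - L)) \<longlonglongrightarrow> 0 \<longrightarrow> L \<in> M)"

lemma closed_subspaceI:
  assumes "0 \<in> M" "\<And>x y. x \<in> M \<Longrightarrow> y \<in> M \<Longrightarrow> x + y \<in> M" "\<And>a x. x \<in> M \<Longrightarrow> sc a x \<in> M"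
    and "\<And>X L. (\<And>n. X n \<in> M) \<Longrightarrow> (\<lambda>n. nm (X n - L)) \<longlonglongrightarrow> 0 \<Longrightarrow> L \<in> M"
  shows "closed_subspace M"
  using assms unfolding closed_subspace_def by blast

lemma closed_subspace_zero: "closed_subspace M \<Longrightarrow> 0 \<in> M"
  unfolding closed_subspace_def by blast
lemma closed_subspace_add: "closed_subspace M \<Longrightarrow> x \<in> M \<Longrightarrow> y \<in> M \<Longrightarrow> x + y \<in> M"
  unfolding closed_subspace_def by blast
lemma closed_subspace_scale: "closed_subspace M \<Longrightarrow> x \<in> M \<Longrightarrow> sc a x \<in> M"
  unfolding closed_subspace_def by blast
lemma closed_subspace_limit:
  "closed_subspace M \<Longrightarrow> (\<And>n. X n \<in> M) \<Longrightarrow> (\<lambda>n. nm (X n - L)) \<longlonglongrightarrow> 0 \<Longrightarrow> L \<in> M"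
  unfolding closed_subspace_def by blast

lemma apollonius:
  "nm (u - v) ^ 2 = 2 * nm (x - u) ^ 2 + 2 * nm (x - v) ^ 2 - 4 * nm (x - sc (1/2) (u + v)) ^ 2"
proof -
  have "(x - u) + (x - v) = sc 2 (x - sc (1/2) (u + v))"
    by (simp add: scale_diff_right scale_scale scale_two algebra_simps)
  then have "nm ((x - u) + (x - v)) ^ 2 = 4 * nm (x - sc (1/2) (u + v)) ^ 2"
    by (simp add: nm_scale power_mult_distrib)
  then show ?thesis using parallelogram[of "x - u" "x - v"] by (simp add: nm_minus_commute)
qed

lemma closest_point_exists:
  assumes M: "closed_subspace M"
  shows "\<exists>L\<in>M. \<forall>m\<in>M. nm (x - L) \<le> nm (x - m)"
proof -
  define D where "D = (\<lambda>m. nm (x - m) ^ 2) ` M"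
  have D: "D \<noteq> {}" "bdd_below D"
    using closed_subspace_zero[OF M] unfolding D_def bdd_below_def by (auto intro: exI[of _ 0])
  have d_le: "Inf D \<le> nm (x - m) ^ 2" if "m \<in> M" for m
    using that D(2) unfolding D_def by (auto intro: cInf_lower)
  have "\<exists>m\<in>M. nm (x - m) ^ 2 < Inf D + 1 / Suc n" for n
    using cInf_less_iff[OF D, of "Inf D + 1 / Suc n"] unfolding D_def by auto
  then obtain X where XM: "\<And>n. X n \<in> M" and Xd: "\<And>n. nm (x - X n) ^ 2 < Inf D + 1 / Suc n"
    by metis
  have "nm (X m - X n) ^ 2 \<le> 2 / Suc m + 2 / Suc n" for m n
  proof -
    have "sc (1/2) (X m + X n) \<in> M"
      using XM M by (simp add: closed_subspace_add closed_subspace_scale)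
    then show ?thesis
      using apollonius[of "X m" "X n" x] d_le[of "sc (1/2) (X m + X n)"] Xd[of m] Xd[of n] by linarith
  qed
  then obtain L where L: "(\<lambda>n. nm (X n - L)) \<longlonglongrightarrow> 0"
    using convergent_if_square_dist_le by blast
  have "(\<lambda>n. nm (x - X n) ^ 2) \<longlonglongrightarrow> nm (x - L) ^ 2"
    using L by (intro tendsto_power nm_tendsto) (simp add: nm_minus_commute algebra_simps)
  moreover have "(\<lambda>n. Inf D + 1 / Suc n) \<longlonglongrightarrow> Inf D"
    using tendsto_add[OF tendsto_const LIMSEQ_inverse_real_of_nat] by (simp add: inverse_eq_divide)
  ultimately have "nm (x - L) ^ 2 \<le> Inf D"
    using Xd by (intro LIMSEQ_le) (auto intro: less_imp_le)
  then have "nm (x - L) \<le> nm (x - m)" if "m \<in> M" for m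
    using d_le[OF that] power2_le_imp_le[of "nm (x - L)" "nm (x - m)"] by fastforce
  then show ?thesis using closed_subspace_limit[OF M XM L] by blast
qed

lemma closest_point_orthogonal:
  assumes M: "closed_subspace M" and L: "L \<in> M" and closest: "\<And>m. m \<in> M \<Longrightarrow> nm (x - L) \<le> nm (x - m)"
    and y: "y \<in> M"
  shows "ip (x - L) y = 0"
proof (cases "y = 0")
  case False
  define t where "t = ip (x - L) y / nm y ^ 2"
  have "L + sc t y \<in> M" using M L y by (simp add: closed_subspace_add closed_subspace_scale)
  then have "nm (x - L) ^ 2 \<le> nm ((x - L) - sc t y) ^ 2"
    using closest by (simp add: power_mono algebra_simps)
  then have "(cmod (ip (x - L) y))\<^sup>2 / nm y ^ 2 \<le> 0"
    unfolding t_def nm_diff_projection_square[OF False] by simp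
  then show ?thesis using nm_pos[OF False] False by (simp add: divide_le_0_iff)
qed simp

lemma orthogonal_projection_exists:
  "closed_subspace M \<Longrightarrow> \<exists>m\<in>M. \<forall>y\<in>M. ip (x - m) y = 0"
  using closest_point_exists closest_point_orthogonal by metis

lemma closed_subspace_kernel:
  assumes add: "\<And>x y. f (x + y) = f x + f y" and scale: "\<And>a x. f (sc a x) = a * f x"
    and bounded: "\<And>x. cmod (f x) \<le> C * nm x"
  shows "closed_subspace {x. f x = 0}"
proof (rule closed_subspaceI)
  have f0: "f 0 = 0" using add[of 0 0] by simp
  show "0 \<in> {x. f x = 0}" using f0 by simp
  fix X L assume X: "\<And>n. X n \<in> {x. f x = 0}" and lim: "(\<lambda>n. nm (X n - L)) \<longlonglongrightarrow> 0"
  have fL: "f L = - f (X n - L)" for n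
    using X[of n] add[of "X n - L" L] by (simp add: add_eq_0_iff)
  have "cmod (f L) \<le> C * nm (X n - L)" for n
    using fL[of n] bounded[of "X n - L"] by simp
  then have "cmod (f L) \<le> 0"
    using lim by (intro LIMSEQ_le_const[of "\<lambda>n. C * nm (X n - L)"]) (auto intro: tendsto_mult_right_zero)
  then show "L \<in> {x. f x = 0}" by simp
qed (auto simp: add scale)

lemma riesz_representation:
  assumes add: "\<And>x y. f (x + y) = f x + f y" and scale: "\<And>a x. f (sc a x) = a * f x"
    and bounded: "\<And>x. cmod (f x) \<le> C * nm x"
  shows "\<exists>w. \<forall>x. f x = ip x w"
proof (cases "\<forall>x. f x = 0")
  case False
  then obtain x0 where x0: "f x0 \<noteq> 0" by blast
  have diff: "f (x - y) = f x - f y" for x y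
    using add[of "x - y" y] by simp
  obtain m where m: "f m = 0" and orth: "\<And>y. f y = 0 \<Longrightarrow> ip (x0 - m) y = 0"
    using orthogonal_projection_exists[OF closed_subspace_kernel[OF assms], of x0] by blast
  define z where "z = x0 - m"
  have fz: "f z \<noteq> 0" using x0 m diff unfolding z_def by simp
  have "f 0 = 0" using add[of 0 0] by simp
  then have zz: "ip z z \<noteq> 0" using fz ip_self_nm[of z] by auto
  have "f x = ip x (sc (cnj (f z / ip z z)) z)" for x
  proof -
    have "f (x - sc (f x / f z) z) = 0" using fz by (simp add: diff scale)
    then have "ip z (x - sc (f x / f z) z) = 0" using orth unfolding z_def by blast
    then have "ip (x - sc (f x / f z) z) z = 0" using ip_cnj_commute[of z] by simp
    then have "ip x z = f x / f z * ip z z" by (simp add: ip_diff_left ip_scale_left)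
    then show ?thesis using zz fz by (simp add: ip_scale_right field_simps)
  qed
  then show ?thesis by blast
qed (auto intro: exI[of _ 0])

end

context hilbert_space
begin

definition linear_op :: "('h \<Rightarrow> 'h) \<Rightarrow> bool" where
  "linear_op T \<longleftrightarrow> (\<forall>x y. T (x + y) = T x + T y) \<and> (\<forall>a x. T (sc a x) = sc a (T x))"

lemma bops_iff: "T \<in> bops sc ip \<longleftrightarrow> linear_op T \<and> (\<exists>C. \<forall>x. nm (T x) \<le> C * nm x)"
  unfolding bops_def linear_op_def by auto

lemma bopsI: "linear_op T \<Longrightarrow> (\<And>x. nm (T x) \<le> C * nm x) \<Longrightarrow> T \<in> bops sc ip"
  unfolding bops_iff by blast

lemma bops_linear: "T \<in> bops sc ip \<Longrightarrow> linear_op T"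
  unfolding bops_iff by blast

lemma linear_op_add: "linear_op T \<Longrightarrow> T (x + y) = T x + T y"
  unfolding linear_op_def by blast
lemma linear_op_scale: "linear_op T \<Longrightarrow> T (sc a x) = sc a (T x)"
  unfolding linear_op_def by blast
lemma linear_op_zero: "linear_op T \<Longrightarrow> T 0 = 0"
  using linear_op_add[of T 0 0] by simp
lemma linear_op_minus: "linear_op T \<Longrightarrow> T (- x) = - T x"
  using linear_op_add[of T x "-x"] linear_op_zero[of T] by (simp add: eq_neg_iff_add_eq_0 add.commute)
lemma linear_op_diff: "linear_op T \<Longrightarrow> T (x - y) = T x - T y"
  using linear_op_add[of T x "-y"] linear_op_minus[of T y] by simp
lemma linear_op_sum: "linear_op T \<Longrightarrow> T (sum f S) = (\<Sum>i\<in>S. T (f i))"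
  by (induction S rule: infinite_finite_induct) (auto simp: linear_op_add linear_op_zero)

lemma linear_op_const_zero: "linear_op (\<lambda>x. 0)"
  unfolding linear_op_def by simp
lemma linear_op_plus: "linear_op T \<Longrightarrow> linear_op S \<Longrightarrow> linear_op (\<lambda>x. T x + S x)"
  unfolding linear_op_def by (simp add: scale_add_right algebra_simps)
lemma linear_op_minus_op: "linear_op T \<Longrightarrow> linear_op S \<Longrightarrow> linear_op (\<lambda>x. T x - S x)"
  unfolding linear_op_def by (simp add: scale_diff_right algebra_simps)
lemma linear_op_scale_op: "linear_op T \<Longrightarrow> linear_op (\<lambda>x. sc c (T x))"
  unfolding linear_op_def by (simp add: scale_add_right scale_scale mult.commute)
lemma linear_op_comp: "linear_op T \<Longrightarrow> linear_op S \<Longrightarrow> linear_op (T \<circ> S)"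
  unfolding linear_op_def by simp
lemma linear_op_scale_id: "linear_op (\<lambda>x. sc c x)"
  unfolding linear_op_def by (simp add: scale_add_right scale_scale mult.commute)

lemma bops_bound_nonneg: "T \<in> bops sc ip \<Longrightarrow> \<exists>C\<ge>0. \<forall>x. nm (T x) \<le> C * nm x"
proof -
  assume "T \<in> bops sc ip"
  then obtain C where C: "\<And>x. nm (T x) \<le> C * nm x" unfolding bops_iff by blast
  have "nm (T x) \<le> max C 0 * nm x" for x
    using C[of x] by (metis max.cobounded1 mult_right_mono nm_nonneg order_trans)
  then show ?thesis by (intro exI[of _ "max C 0"]) auto
qed

lemma bdd_above_opnorm_set: "T \<in> bops sc ip \<Longrightarrow> bdd_above {nm (T x) |x. nm x \<le> 1}"
proof -
  assume "T \<in> bops sc ip"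
  then obtain C where "C \<ge> 0" "\<And>x. nm (T x) \<le> C * nm x" using bops_bound_nonneg by blast
  then have "\<And>x. nm x \<le> 1 \<Longrightarrow> nm (T x) \<le> C"
    by (metis mult_left_le order_trans)
  then show ?thesis unfolding bdd_above_def by blast
qed

lemma nm_le_opnorm: "T \<in> bops sc ip \<Longrightarrow> nm x \<le> 1 \<Longrightarrow> nm (T x) \<le> opnorm ip T"
  unfolding opnorm_def by (rule cSup_upper) (auto simp: bdd_above_opnorm_set)

lemma opnorm_nonneg: "T \<in> bops sc ip \<Longrightarrow> opnorm ip T \<ge> 0"
  using nm_le_opnorm[of T 0] nm_nonneg[of "T 0"] by (simp del: nm_nonneg)

lemma opnorm_bound: "T \<in> bops sc ip \<Longrightarrow> nm (T x) \<le> opnorm ip T * nm x"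
proof (cases "x = 0")
  case True
  assume "T \<in> bops sc ip"
  then show ?thesis using True linear_op_zero[OF bops_linear] by simp
next
  case False
  assume T: "T \<in> bops sc ip"
  have nx: "nm x > 0" using False nm_pos by blast
  have "nm (sc (1 / nm x) x) = 1" using nx False by (simp add: nm_scale norm_divide)
  then have "nm (T (sc (1 / nm x) x)) \<le> opnorm ip T" using nm_le_opnorm[OF T] by simp
  moreover have "nm (T (sc (1 / nm x) x)) = nm (T x) / nm x"
    using nx linear_op_scale[OF bops_linear[OF T]] by (simp add: nm_scale norm_divide)
  ultimately show ?thesis using nx by (simp add: field_simps)
qed

lemma opnorm_le:
  assumes "C \<ge> 0" "\<And>x. nm (T x) \<le> C * nm x"
  shows "opnorm ip T \<le> C"
  unfolding opnorm_def
proof (rule cSup_least)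
  show "{nm (T x) |x. nm x \<le> 1} \<noteq> {}" by (auto intro: exI[of _ 0])
  fix y assume "y \<in> {nm (T x) |x. nm x \<le> 1}"
  then show "y \<le> C" using assms by (smt (verit) mem_Collect_eq mult_left_le)
qed

lemma opnorm_approximated:
  assumes "e > 0" shows "\<exists>x. nm x \<le> 1 \<and> nm (T x) > opnorm ip T - e"
proof (rule ccontr)
  assume "\<not> ?thesis"
  then have "opnorm ip T \<le> opnorm ip T - e" unfolding opnorm_def[of ip T]
    by (intro cSup_least) (auto intro: exI[of _ 0] simp: not_less)
  then show False using assms by simp
qed

lemma opnorm_eq_zero_iff: "T \<in> bops sc ip \<Longrightarrow> opnorm ip T = 0 \<longleftrightarrow> T = (\<lambda>x. 0)"
proof
  assume T: "T \<in> bops sc ip" and "opnorm ip T = 0"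
  then show "T = (\<lambda>x. 0)" using opnorm_bound[OF T] nm_nonneg by (auto intro!: ext)
next
  assume "T = (\<lambda>x. 0)"
  then have "{nm (T x) |x. nm x \<le> 1} = {0}" by (auto intro: exI[of _ 0])
  then show "opnorm ip T = 0" unfolding opnorm_def by simp
qed

lemma bops_zero: "(\<lambda>x. 0) \<in> bops sc ip"
  by (rule bopsI[where C=0]) (auto simp: linear_op_const_zero)
lemma opnorm_zero [simp]: "opnorm ip (\<lambda>x. 0) = 0"
  using opnorm_eq_zero_iff[OF bops_zero] by simp
lemma bops_scale_id: "(\<lambda>x. sc c x) \<in> bops sc ip"
  by (rule bopsI[where C="cmod c"]) (auto simp: linear_op_scale_id nm_scale)

lemma bops_add:
  assumes "T \<in> bops sc ip" "S \<in> bops sc ip"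
  shows "(\<lambda>x. T x + S x) \<in> bops sc ip" "opnorm ip (\<lambda>x. T x + S x) \<le> opnorm ip T + opnorm ip S"
proof -
  have b: "nm (T x + S x) \<le> (opnorm ip T + opnorm ip S) * nm x" for x
    using nm_triangle[of "T x" "S x"] opnorm_bound[OF assms(1), of x] opnorm_bound[OF assms(2), of x]
    by (simp add: distrib_right)
  show "(\<lambda>x. T x + S x) \<in> bops sc ip" using b linear_op_plus bops_linear assms by (blast intro: bopsI)
  show "opnorm ip (\<lambda>x. T x + S x) \<le> opnorm ip T + opnorm ip S"
    by (rule opnorm_le) (use b opnorm_nonneg assms in auto)
qed

lemma bops_diff:
  assumes "T \<in> bops sc ip" "S \<in> bops sc ip"
  shows "(\<lambda>x. T x - S x) \<in> bops sc ip" "opnorm ip (\<lambda>x. T x - S x) \<le> opnorm ip T + opnorm ip S"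
proof -
  have b: "nm (T x - S x) \<le> (opnorm ip T + opnorm ip S) * nm x" for x
    using nm_diff_le[of "T x" "S x"] opnorm_bound[OF assms(1), of x] opnorm_bound[OF assms(2), of x]
    by (simp add: distrib_right)
  show "(\<lambda>x. T x - S x) \<in> bops sc ip" using b linear_op_minus_op bops_linear assms by (blast intro: bopsI)
  show "opnorm ip (\<lambda>x. T x - S x) \<le> opnorm ip T + opnorm ip S"
    by (rule opnorm_le) (use b opnorm_nonneg assms in auto)
qed

lemma bops_scale:
  assumes "T \<in> bops sc ip"
  shows "(\<lambda>x. sc c (T x)) \<in> bops sc ip" "opnorm ip (\<lambda>x. sc c (T x)) \<le> cmod c * opnorm ip T"
proof -
  have b: "nm (sc c (T x)) \<le> (cmod c * opnorm ip T) * nm x" for x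
    using opnorm_bound[OF assms(1), of x] by (simp add: nm_scale mult.assoc mult_left_mono)
  show "(\<lambda>x. sc c (T x)) \<in> bops sc ip" using b linear_op_scale_op bops_linear assms by (blast intro: bopsI)
  show "opnorm ip (\<lambda>x. sc c (T x)) \<le> cmod c * opnorm ip T"
    by (rule opnorm_le) (use b opnorm_nonneg assms in auto)
qed

lemma bops_comp:
  assumes "T \<in> bops sc ip" "S \<in> bops sc ip"
  shows "T \<circ> S \<in> bops sc ip" "opnorm ip (T \<circ> S) \<le> opnorm ip T * opnorm ip S"
proof -
  have b: "nm (T (S x)) \<le> (opnorm ip T * opnorm ip S) * nm x" for x
    using opnorm_bound[OF assms(1), of "S x"] opnorm_bound[OF assms(2), of x] opnorm_nonneg[OF assms(1)]
    by (smt (verit, best) mult.assoc mult_left_mono)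
  show "T \<circ> S \<in> bops sc ip" using b linear_op_comp bops_linear assms by (auto intro!: bopsI)
  show "opnorm ip (T \<circ> S) \<le> opnorm ip T * opnorm ip S"
    by (rule opnorm_le) (use b opnorm_nonneg assms in auto)
qed

lemma opnorm_minus_commute: "opnorm ip (\<lambda>x. T x - S x) = opnorm ip (\<lambda>x. S x - T x)"
  unfolding opnorm_def by (simp add: nm_minus_commute)

lemma adj_exists:
  assumes T: "T \<in> bops sc ip" shows "\<exists>S. \<forall>x y. ip (T x) y = ip x (S y)"
proof -
  have "\<exists>w. \<forall>x. ip (T x) y = ip x w" for y
  proof (rule riesz_representation)
    show "ip (T (x + x')) y = ip (T x) y + ip (T x') y" for x x'
      using linear_op_add[OF bops_linear[OF T]] by (simp add: ip_add_left)
    show "ip (T (sc a x)) y = a * ip (T x) y" for a x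
      using linear_op_scale[OF bops_linear[OF T]] by (simp add: ip_scale_left)
    show "cmod (ip (T x) y) \<le> (opnorm ip T * nm y) * nm x" for x
      using cauchy_schwarz[of "T x" y] opnorm_bound[OF T, of x]
      by (smt (verit, ccfv_SIG) mult.commute mult.left_commute mult_right_mono nm_nonneg)
  qed
  then show ?thesis by metis
qed

lemma adj_eqI: "(\<And>x y. ip (T x) y = ip x (S y)) \<Longrightarrow> adj ip T = S"
  unfolding adj_def
proof (rule the_equality)
  fix S' assume "\<And>x y. ip (T x) y = ip x (S y)" and "\<forall>x y. ip (T x) y = ip x (S' y)"
  then show "S' = S" by (metis ip_eqI ext)
qed blast

lemma ip_adj_right: "T \<in> bops sc ip \<Longrightarrow> ip (T x) y = ip x (adj ip T y)"
  using adj_exists adj_eqI by metis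

lemma ip_adj_left: "T \<in> bops sc ip \<Longrightarrow> ip (adj ip T x) y = ip x (T y)"
  by (metis ip_adj_right ip_cnj_commute)

lemma adj_bops:
  assumes T: "T \<in> bops sc ip"
  shows "adj ip T \<in> bops sc ip" "opnorm ip (adj ip T) \<le> opnorm ip T"
proof -
  let ?S = "adj ip T"
  have l: "linear_op ?S" unfolding linear_op_def
  proof (intro conjI allI)
    fix y z show "?S (y + z) = ?S y + ?S z"
      by (rule ip_eqI) (simp add: ip_adj_right[OF T, symmetric] ip_add_right)
  next
    fix a y show "?S (sc a y) = sc a (?S y)"
      by (rule ip_eqI) (simp add: ip_adj_right[OF T, symmetric] ip_scale_right)
  qed
  have b: "nm (?S y) \<le> opnorm ip T * nm y" for y
  proof (cases "?S y = 0")
    case False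
    have "nm (?S y) ^ 2 = Re (ip (T (?S y)) y)" by (simp add: nm_square ip_adj_right[OF T])
    also have "\<dots> \<le> nm (T (?S y)) * nm y" using abs_Re_ip_le by (rule abs_le_D1)
    also have "\<dots> \<le> opnorm ip T * nm (?S y) * nm y"
      using opnorm_bound[OF T] by (simp add: mult_right_mono)
    finally have "nm (?S y) * nm (?S y) \<le> (opnorm ip T * nm y) * nm (?S y)"
      by (simp add: power2_eq_square mult_ac)
    then show ?thesis using nm_pos[OF False] by simp
  qed (use opnorm_nonneg[OF T] in simp)
  show S: "?S \<in> bops sc ip" using l b by (rule bopsI)
  show "opnorm ip ?S \<le> opnorm ip T" by (rule opnorm_le[OF opnorm_nonneg[OF T] b])
qed

lemma adj_adj: "T \<in> bops sc ip \<Longrightarrow> adj ip (adj ip T) = T"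
  by (rule adj_eqI) (simp add: ip_adj_left)

lemma adj_add: "T \<in> bops sc ip \<Longrightarrow> S \<in> bops sc ip \<Longrightarrow>
    adj ip (\<lambda>x. T x + S x) = (\<lambda>x. adj ip T x + adj ip S x)"
  by (rule adj_eqI) (simp add: ip_add_left ip_add_right ip_adj_right)

lemma adj_diff: "T \<in> bops sc ip \<Longrightarrow> S \<in> bops sc ip \<Longrightarrow>
    adj ip (\<lambda>x. T x - S x) = (\<lambda>x. adj ip T x - adj ip S x)"
  by (rule adj_eqI) (simp add: ip_diff_left ip_diff_right ip_adj_right)

lemma adj_scale: "T \<in> bops sc ip \<Longrightarrow> adj ip (\<lambda>x. sc c (T x)) = (\<lambda>x. sc (cnj c) (adj ip T x))"
  by (rule adj_eqI) (simp add: ip_scale_left ip_scale_right ip_adj_right)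

lemma adj_minus_scale_id:
  "T \<in> bops sc ip \<Longrightarrow> adj ip (\<lambda>x. T x - sc l x) = (\<lambda>x. adj ip T x - sc (cnj l) x)"
  by (rule adj_eqI) (simp add: ip_diff_left ip_diff_right ip_scale_left ip_scale_right ip_adj_right)

definition hermitian :: "('h \<Rightarrow> 'h) \<Rightarrow> bool" where
  "hermitian T \<longleftrightarrow> (\<forall>x y. ip (T x) y = ip x (T y))"

lemma hermitian_iff_adj: "T \<in> bops sc ip \<Longrightarrow> adj ip T = T \<longleftrightarrow> hermitian T"
  unfolding hermitian_def by (metis ip_adj_right adj_eqI)

lemma hermitianD: "hermitian T \<Longrightarrow> ip (T x) y = ip x (T y)"
  unfolding hermitian_def by blast

lemma ip_hermitian_self: "hermitian T \<Longrightarrow> ip (T x) x = complex_of_real (Re (ip (T x) x))"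
  by (metis hermitianD ip_cnj_commute Reals_cnj_iff complex_is_Real_iff of_real_Re)

lemma hermitian_part_approx:
  assumes T: "T \<in> bops sc ip" and sT: "adj ip T = T" and a: "a \<in> bops sc ip"
  defines "b \<equiv> \<lambda>x. sc (1/2) (a x + adj ip a x)"
  shows "adj ip b = b" "opnorm ip (\<lambda>x. T x - b x) \<le> opnorm ip (\<lambda>x. T x - a x)"
proof -
  have a': "adj ip a \<in> bops sc ip" by (rule adj_bops(1)[OF a])
  show "adj ip b = b"
    unfolding b_def adj_scale[OF bops_add(1)[OF a a']] adj_add[OF a a'] adj_adj[OF a]
    by (simp add: add.commute)
  define D where "D = (\<lambda>x. a x - T x)"
  have D: "D \<in> bops sc ip" unfolding D_def by (rule bops_diff(1)[OF a T])
  have "(\<lambda>x. b x - T x) = (\<lambda>x. sc (1/2) (D x + adj ip D x))"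
  proof
    fix x
    have "D x + adj ip D x = (a x + adj ip a x) - (T x + T x)"
      unfolding D_def adj_diff[OF a T] sT by simp
    then show "b x - T x = sc (1/2) (D x + adj ip D x)"
      unfolding b_def by (simp add: scale_diff_right scale_half_double)
  qed
  then have "opnorm ip (\<lambda>x. T x - b x) \<le> (1/2) * opnorm ip (\<lambda>x. D x + adj ip D x)"
    using bops_scale(2)[OF bops_add(1)[OF D adj_bops(1)[OF D]], of "1/2"] opnorm_minus_commute[of T b]
    by simp
  also have "\<dots> \<le> (1/2) * (opnorm ip D + opnorm ip D)"
    using bops_add(2)[OF D adj_bops(1)[OF D]] adj_bops(2)[OF D] by simp
  finally show "opnorm ip (\<lambda>x. T x - b x) \<le> opnorm ip (\<lambda>x. T x - a x)"
    unfolding D_def using opnorm_minus_commute[of a T] by simp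
qed

end

section \<open>Invertibility and the spectrum\<close>

context hilbert_space
begin

definition invertible :: "('h \<Rightarrow> 'h) \<Rightarrow> bool" where
  "invertible T \<longleftrightarrow> (\<exists>S\<in>bops sc ip. (\<forall>x. S (T x) = x) \<and> (\<forall>x. T (S x) = x))"

lemma in_spectrum_iff: "l \<in> op_spectrum sc ip T \<longleftrightarrow> \<not> invertible (\<lambda>x. T x - sc l x)"
  unfolding op_spectrum_def invertible_def by simp

lemma invertible_comp:
  assumes "invertible T" "invertible S" shows "invertible (T \<circ> S)"
proof -
  obtain T' where T': "T' \<in> bops sc ip" "\<And>x. T' (T x) = x" "\<And>x. T (T' x) = x"
    using assms(1) unfolding invertible_def by blast
  obtain S' where S': "S' \<in> bops sc ip" "\<And>x. S' (S x) = x" "\<And>x. S (S' x) = x"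
    using assms(2) unfolding invertible_def by blast
  show ?thesis unfolding invertible_def
    by (rule bexI[of _ "S' \<circ> T'"]) (auto simp: T' S' bops_comp)
qed

lemma invertible_scale_id: "c \<noteq> 0 \<Longrightarrow> invertible (\<lambda>x. sc c x)"
  unfolding invertible_def
  by (rule bexI[of _ "\<lambda>x. sc (1/c) x"]) (auto simp: scale_scale bops_scale_id)

lemma invertible_bounded_below:
  assumes "invertible T" obtains C where "C > 0" "\<And>x. nm x \<le> C * nm (T x)"
proof -
  obtain S where S: "S \<in> bops sc ip" "\<And>x. S (T x) = x"
    using assms unfolding invertible_def by blast
  have "nm x \<le> (opnorm ip S + 1) * nm (T x)" for x
    using opnorm_bound[OF S(1), of "T x"] S(2)[of x]
    by (smt (verit, ccfv_SIG) mult_right_mono nm_nonneg distrib_right mult_1)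
  then show ?thesis using that[of "opnorm ip S + 1"] opnorm_nonneg[OF S(1)] by simp
qed

lemma bops_tendsto:
  assumes T: "T \<in> bops sc ip" and lim: "(\<lambda>n. nm (u n - U)) \<longlonglongrightarrow> 0"
  shows "(\<lambda>n. nm (T (u n) - T U)) \<longlonglongrightarrow> 0"
proof (rule Lim_null_comparison[OF always_eventually])
  show "\<forall>n. norm (nm (T (u n) - T U)) \<le> opnorm ip T * nm (u n - U)"
    using opnorm_bound[OF T] by (simp add: linear_op_diff[OF bops_linear[OF T], symmetric])
  show "(\<lambda>n. opnorm ip T * nm (u n - U)) \<longlonglongrightarrow> 0"
    using tendsto_mult_right_zero[OF lim] .
qed

lemma closed_range_if_bounded_below:
  assumes T: "T \<in> bops sc ip" and c: "c > 0" and below: "\<And>x. c * nm x \<le> nm (T x)"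
  shows "closed_subspace (range T)"
proof (rule closed_subspaceI)
  have l: "linear_op T" by (rule bops_linear[OF T])
  show "0 \<in> range T" using linear_op_zero[OF l] by (metis rangeI)
  show "x + y \<in> range T" if "x \<in> range T" "y \<in> range T" for x y
    using that by (auto simp: linear_op_add[OF l, symmetric])
  show "sc a x \<in> range T" if "x \<in> range T" for a x
    using that by (auto simp: linear_op_scale[OF l, symmetric])
  fix X L assume X: "\<And>n. X n \<in> range T" and lim: "(\<lambda>n. nm (X n - L)) \<longlonglongrightarrow> 0"
  define u where "u n = inv T (X n)" for n
  have u: "X n = T (u n)" for n unfolding u_def using X[of n] by (simp add: f_inv_into_f)
  have "\<forall>e>0. \<exists>N. \<forall>m\<ge>N. \<forall>n\<ge>N. nm (u m - u n) < e"
  proof (intro allI impI)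
    fix e :: real assume "e > 0"
    then have "c * e > 0" using c by simp
    then obtain N where N: "\<And>m n. m \<ge> N \<Longrightarrow> n \<ge> N \<Longrightarrow> nm (X m - X n) < c * e"
      using convergent_imp_Cauchy[OF lim] by blast
    have "c * nm (u m - u n) \<le> nm (X m - X n)" for m n
      using below[of "u m - u n"] by (simp add: u linear_op_diff[OF l])
    then have "nm (u m - u n) < e" if "m \<ge> N" "n \<ge> N" for m n
      using N[OF that] c by (smt (verit) mult_less_cancel_left_pos)
    then show "\<exists>N. \<forall>m\<ge>N. \<forall>n\<ge>N. nm (u m - u n) < e" by blast
  qed
  then obtain U where "(\<lambda>n. nm (u n - U)) \<longlonglongrightarrow> 0" using Cauchy_imp_convergent by blast
  then have "(\<lambda>n. nm (X n - T U)) \<longlonglongrightarrow> 0" unfolding u by (rule bops_tendsto[OF T])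
  then show "L \<in> range T" using limit_unique[OF lim] by blast
qed

lemma surj_if_closed_range:
  assumes T: "T \<in> bops sc ip" and R: "closed_subspace (range T)"
    and adj_inj: "\<And>y. adj ip T y = 0 \<Longrightarrow> y = 0"
  shows "surj T"
proof -
  have "y \<in> range T" for y
  proof -
    obtain m where m: "m \<in> range T" and orth: "\<And>r. r \<in> range T \<Longrightarrow> ip (y - m) r = 0"
      using orthogonal_projection_exists[OF R, of y] by blast
    have "ip x (adj ip T (y - m)) = 0" for x
      using orth[of "T x"] ip_adj_right[OF T, of x "y - m"] ip_cnj_commute[of "T x"] by simp
    then have "adj ip T (y - m) = 0" using ip_self_eq_zero by blast
    then have "y - m = 0" by (rule adj_inj)
    then show ?thesis using m by simp
  qed
  then show ?thesis by blast
qed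

lemma invertible_if_bounded_below_surj:
  assumes T: "T \<in> bops sc ip" and c: "c > 0" and below: "\<And>x. c * nm x \<le> nm (T x)"
    and surj: "surj T"
  shows "invertible T"
proof -
  have l: "linear_op T" by (rule bops_linear[OF T])
  have "inj T"
  proof (rule injI)
    fix x y assume "T x = T y"
    then have "c * nm (x - y) \<le> 0" using below[of "x - y"] by (simp add: linear_op_diff[OF l])
    then show "x = y" using c by (simp add: mult_le_0_iff)
  qed
  then have TS: "T (inv T y) = y" and ST: "inv T (T x) = x" for x y
    using surj by (simp_all add: surj_f_inv_f)
  have "linear_op (inv T)" unfolding linear_op_def
  proof (intro conjI allI)
    fix x y show "inv T (x + y) = inv T x + inv T y"
      by (rule injD[OF \<open>inj T\<close>]) (simp add: TS linear_op_add[OF l])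
  next
    fix a x show "inv T (sc a x) = sc a (inv T x)"
      by (rule injD[OF \<open>inj T\<close>]) (simp add: TS linear_op_scale[OF l])
  qed
  moreover have "nm (inv T y) \<le> (1 / c) * nm y" for y
    using below[of "inv T y"] c by (simp add: TS field_simps)
  ultimately have "inv T \<in> bops sc ip" by (rule bopsI)
  then show ?thesis unfolding invertible_def using TS ST by blast
qed

lemma invertible_if_bounded_below:
  assumes T: "T \<in> bops sc ip" and c: "c > 0" and below: "\<And>x. c * nm x \<le> nm (T x)"
    and adj_inj: "\<And>y. adj ip T y = 0 \<Longrightarrow> y = 0"
  shows "invertible T"
  using invertible_if_bounded_below_surj[OF T c below]
    surj_if_closed_range[OF T closed_range_if_bounded_below[OF T c below] adj_inj] .

lemma nm_minus_scale_ge: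
  assumes T: "T \<in> bops sc ip"
  shows "(cmod l - opnorm ip T) * nm x \<le> nm (T x - sc l x)"
  using nm_reverse_triangle[of "sc l x" "T x"] opnorm_bound[OF T, of x]
  by (simp add: nm_scale nm_minus_commute left_diff_distrib)

lemma spectrum_le_opnorm:
  assumes T: "T \<in> bops sc ip" and l: "l \<in> op_spectrum sc ip T"
  shows "cmod l \<le> opnorm ip T"
proof (rule ccontr)
  assume "\<not> cmod l \<le> opnorm ip T"
  then have big: "cmod l - opnorm ip T > 0" by simp
  have "invertible (\<lambda>x. T x - sc l x)"
  proof (rule invertible_if_bounded_below[OF bops_diff(1)[OF T bops_scale_id] big nm_minus_scale_ge[OF T]])
    fix y assume "adj ip (\<lambda>x. T x - sc l x) y = 0"
    then have "adj ip T y - sc (cnj l) y = 0" by (simp add: adj_minus_scale_id[OF T])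
    moreover have "(cmod (cnj l) - opnorm ip (adj ip T)) * nm y \<le> nm (adj ip T y - sc (cnj l) y)"
      by (rule nm_minus_scale_ge[OF adj_bops(1)[OF T]])
    moreover have "cmod (cnj l) - opnorm ip (adj ip T) > 0" using big adj_bops(2)[OF T] by simp
    ultimately show "y = 0" by (simp add: mult_le_0_iff)
  qed
  then show False using l in_spectrum_iff by blast
qed

lemma nm_minus_scale_ge_Im:
  assumes "hermitian T"
  shows "\<bar>Im l\<bar> * nm x \<le> nm (T x - sc l x)"
proof -
  have "ip (T x - sc l x) x = complex_of_real (Re (ip (T x) x)) - l * complex_of_real (nm x ^ 2)"
    using ip_hermitian_self[OF assms, of x] by (simp add: ip_diff_left ip_scale_left ip_self_nm)
  then have "\<bar>Im l\<bar> * nm x ^ 2 = \<bar>Im (ip (T x - sc l x) x)\<bar>"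
    by (simp add: abs_mult)
  also have "\<dots> \<le> cmod (ip (T x - sc l x) x)" by (rule abs_Im_le_cmod)
  also have "\<dots> \<le> nm (T x - sc l x) * nm x" by (rule cauchy_schwarz)
  finally have "(\<bar>Im l\<bar> * nm x) * nm x \<le> nm (T x - sc l x) * nm x"
    by (simp add: power2_eq_square mult_ac)
  then show ?thesis by (cases "x = 0") (auto dest: nm_pos simp: mult_le_cancel_right)
qed

lemma spectrum_hermitian_real:
  assumes T: "T \<in> bops sc ip" and h: "hermitian T" and l: "l \<in> op_spectrum sc ip T"
  shows "Im l = 0"
proof (rule ccontr)
  assume "Im l \<noteq> 0"
  then have im: "\<bar>Im l\<bar> > 0" by simp
  have "invertible (\<lambda>x. T x - sc l x)"
  proof (rule invertible_if_bounded_below[OF bops_diff(1)[OF T bops_scale_id] im nm_minus_scale_ge_Im[OF h]])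
    fix y assume "adj ip (\<lambda>x. T x - sc l x) y = 0"
    then have "T y - sc (cnj l) y = 0"
      using adj_minus_scale_id[OF T] hermitian_iff_adj[OF T] h by metis
    then show "y = 0" using nm_minus_scale_ge_Im[OF h, of "cnj l" y] im by (simp add: mult_le_0_iff)
  qed
  then show False using l in_spectrum_iff by blast
qed

lemma hermitian_square_defect:
  assumes T: "T \<in> bops sc ip" and h: "hermitian T" and x: "nm x \<le> 1"
  defines "b \<equiv> opnorm ip T"
  shows "nm (T (T x) - sc (b\<^sup>2) x) ^ 2 \<le> 2 * b\<^sup>2 * (b\<^sup>2 - nm (T x) ^ 2)"
proof -
  have b: "b \<ge> 0" unfolding b_def by (rule opnorm_nonneg[OF T])
  have ipT: "ip (T (T x)) x = complex_of_real (nm (T x) ^ 2)"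
    using hermitianD[OF h, of "T x" x] by (simp add: ip_cnj_commute[of "T x"] ip_self_nm)
  have "cmod ((complex_of_real b)\<^sup>2) = b\<^sup>2" using b by (simp add: norm_power)
  then have "nm (T (T x) - sc (b\<^sup>2) x) ^ 2 = nm (T (T x)) ^ 2 - 2 * b\<^sup>2 * nm (T x) ^ 2 + b^4 * nm x ^ 2"
    by (simp add: nm_diff_square ip_scale_right ipT nm_scale power_mult_distrib)
  also have "\<dots> \<le> b^4 - 2 * b\<^sup>2 * nm (T x) ^ 2 + b^4"
  proof -
    have "nm (T (T x)) \<le> b * (b * nm x)"
      using opnorm_bound[OF T, of "T x"] opnorm_bound[OF T, of x] b unfolding b_def
      by (meson mult_left_mono order_trans)
    also have "\<dots> \<le> b * b" using mult_left_mono[OF mult_left_mono[OF x b] b] by simp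
    finally have "nm (T (T x)) ^ 2 \<le> (b * b) ^ 2" by (simp add: power_mono)
    moreover have "b^4 * nm x ^ 2 \<le> b^4" using x by (simp add: mult_left_le power_le_one)
    ultimately show ?thesis by (simp add: power2_eq_square power4_eq_xxxx mult_ac)
  qed
  also have "\<dots> = 2 * b\<^sup>2 * (b\<^sup>2 - nm (T x) ^ 2)"
    by (simp add: power2_eq_square power4_eq_xxxx algebra_simps)
  finally show ?thesis .
qed

lemma hermitian_square_not_bounded_below:
  assumes T: "T \<in> bops sc ip" and h: "hermitian T" and nz: "T \<noteq> (\<lambda>x. 0)" and C: "C > 0"
  defines "b \<equiv> opnorm ip T"
  shows "\<exists>x. C * nm (T (T x) - sc (b\<^sup>2) x) < nm x"
proof -
  have b: "b > 0"
    using opnorm_nonneg[OF T] opnorm_eq_zero_iff[OF T] nz unfolding b_def by fastforce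
  define e where "e = min (b/2) (1 / (16 * C\<^sup>2 * b^3))"
  have e: "e > 0" "e \<le> b/2" "e \<le> 1 / (16 * C\<^sup>2 * b^3)" using b C unfolding e_def by auto
  obtain x where x: "nm x \<le> 1" and xt: "nm (T x) > b - e"
    using opnorm_approximated[OF e(1)] unfolding b_def by blast
  define t where "t = nm (T x)"
  have tb: "t \<le> b * nm x" using opnorm_bound[OF T, of x] unfolding t_def b_def .
  have "b\<^sup>2 - t\<^sup>2 = (b - t) * (2 * b) - (b - t)\<^sup>2" by (simp add: power2_eq_square algebra_simps)
  then have "b\<^sup>2 - t\<^sup>2 \<le> (b - t) * (2 * b)" by simp
  also have "\<dots> < e * (2 * b)" using xt b unfolding t_def by (intro mult_strict_right_mono) auto
  finally have d: "b\<^sup>2 - t\<^sup>2 < 2 * b * e" by (simp add: mult_ac)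
  have "b / 2 \<le> b * nm x" using tb xt e unfolding t_def by linarith
  then have "1/2 \<le> nm x" using b by (simp add: field_simps)
  then have xs: "1/4 \<le> nm x ^ 2" using power_mono[of "1/2" "nm x" 2] by (simp add: power_divide)
  have "(C * nm (T (T x) - sc (b\<^sup>2) x)) ^ 2 \<le> C\<^sup>2 * (2 * b\<^sup>2 * (b\<^sup>2 - t\<^sup>2))"
    using hermitian_square_defect[OF T h x] C unfolding t_def b_def
    by (simp add: power_mult_distrib mult_left_mono)
  also have "\<dots> < C\<^sup>2 * (2 * b\<^sup>2 * (2 * b * e))" using d b C by (intro mult_strict_left_mono) auto
  also have "\<dots> = 4 * (C\<^sup>2 * b^3) * e" by (simp add: power2_eq_square power3_eq_cube mult_ac)
  also have "\<dots> \<le> 4 * (C\<^sup>2 * b^3) * (1 / (16 * C\<^sup>2 * b^3))" using e b C by (intro mult_left_mono) auto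
  also have "\<dots> \<le> nm x ^ 2" using b C xs by simp
  finally show ?thesis using power2_less_imp_less nm_nonneg by blast
qed

text \<open>Otherwise \<open>T\<^sup>2 - \<parallel>T\<parallel>\<^sup>2 = (T - \<parallel>T\<parallel>)(T + \<parallel>T\<parallel>)\<close> would be invertible, hence bounded below.\<close>
lemma opnorm_in_spectrum:
  assumes T: "T \<in> bops sc ip" and h: "hermitian T" and nz: "T \<noteq> (\<lambda>x. 0)"
  shows "complex_of_real (opnorm ip T) \<in> op_spectrum sc ip T \<or>
         complex_of_real (- opnorm ip T) \<in> op_spectrum sc ip T"
proof (rule ccontr)
  define b where "b = opnorm ip T"
  assume "\<not> ?thesis"
  then have "invertible (\<lambda>x. T x - sc b x)" "invertible (\<lambda>x. T x - sc (- b) x)"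
    unfolding b_def in_spectrum_iff of_real_minus by blast+
  then have "invertible ((\<lambda>x. T x - sc b x) \<circ> (\<lambda>x. T x - sc (- b) x))"
    by (rule invertible_comp)
  moreover have "(\<lambda>x. T x - sc b x) \<circ> (\<lambda>x. T x - sc (- b) x) = (\<lambda>x. T (T x) - sc (b\<^sup>2) x)"
  proof
    fix x
    have l: "linear_op T" by (rule bops_linear[OF T])
    show "((\<lambda>x. T x - sc b x) \<circ> (\<lambda>x. T x - sc (- b) x)) x = T (T x) - sc (b\<^sup>2) x"
      by (simp add: linear_op_add[OF l] linear_op_scale[OF l] scale_add_right scale_diff_right
          scale_scale scale_minus_left power2_eq_square)
  qed
  ultimately obtain C where C: "C > 0" "\<And>x. nm x \<le> C * nm (T (T x) - sc (b\<^sup>2) x)"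
    using invertible_bounded_below by (simp only:) blast
  obtain x where "C * nm (T (T x) - sc (b\<^sup>2) x) < nm x"
    using hermitian_square_not_bounded_below[OF T h nz C(1)] unfolding b_def by blast
  then show False using C(2)[of x] by linarith
qed

end

section \<open>Polynomials in an operator\<close>

definition real_poly :: "complex poly \<Rightarrow> bool" where
  "real_poly p \<longleftrightarrow> (\<forall>k. coeff p k \<in> \<real>)"

lemma real_poly_0 [simp]: "real_poly 0"
  unfolding real_poly_def by simp

lemma real_poly_pCons: "real_poly (pCons a p) \<longleftrightarrow> a \<in> \<real> \<and> real_poly p"
  unfolding real_poly_def by (metis coeff_pCons_0 coeff_pCons_Suc not0_implies_Suc)

lemma real_poly_add: "real_poly p \<Longrightarrow> real_poly q \<Longrightarrow> real_poly (p + q)"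
  unfolding real_poly_def by (simp add: Reals_add)

lemma real_poly_mult: "real_poly p \<Longrightarrow> real_poly q \<Longrightarrow> real_poly (p * q)"
  unfolding real_poly_def by (simp add: coeff_mult Reals_mult sum_in_Reals)

lemma real_poly_smult: "c \<in> \<real> \<Longrightarrow> real_poly p \<Longrightarrow> real_poly (smult c p)"
  unfolding real_poly_def by (simp add: Reals_mult)

lemma real_poly_prod: "(\<And>i. i \<in> S \<Longrightarrow> real_poly (f i)) \<Longrightarrow> real_poly (\<Prod>i\<in>S. f i)"
  by (induction S rule: infinite_finite_induct) (auto simp: real_poly_mult one_pCons real_poly_pCons)

lemma poly_in_Reals: "real_poly p \<Longrightarrow> x \<in> \<real> \<Longrightarrow> poly p x \<in> \<real>"
  by (induction p) (auto simp: real_poly_pCons Reals_add Reals_mult)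

lemma prod_linear_factors_dvd:
  fixes p :: "complex poly"
  assumes "finite S" "\<And>s. s \<in> S \<Longrightarrow> poly p s = 0"
  shows "(\<Prod>s\<in>S. [:-s, 1:]) dvd p"
  using assms
proof (induction S arbitrary: p rule: finite_induct)
  case (insert s F)
  then obtain q where pq: "p = [:-s, 1:] * q"
    using poly_eq_0_iff_dvd by (metis dvdE insertI1)
  have "poly q t = 0" if "t \<in> F" for t
    using insert.prems[of t] insert.hyps(2) that pq by auto
  then have "(\<Prod>s\<in>F. [:-s, 1:]) dvd q" using insert.IH by blast
  then show ?case unfolding pq prod.insert[OF insert.hyps(1,2)] by (rule mult_dvd_mono[OF dvd_refl])
qed simp

lemma real_poly_interpolation:
  fixes v :: "complex \<Rightarrow> complex"
  assumes "finite S" "S \<subseteq> \<real>" "\<And>s. s \<in> S \<Longrightarrow> v s \<in> \<real>"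
  shows "\<exists>p. real_poly p \<and> (\<forall>s\<in>S. poly p s = v s)"
  using assms
proof (induction S rule: finite_induct)
  case (insert s F)
  then obtain p where p: "real_poly p" "\<And>t. t \<in> F \<Longrightarrow> poly p t = v t" by auto
  define m where "m = (\<Prod>t\<in>F. [:-t, 1:])"
  have m: "real_poly m" unfolding m_def using insert.prems by (intro real_poly_prod) (auto simp: real_poly_pCons)
  have m0: "poly m t = 0" if "t \<in> F" for t
    unfolding m_def poly_prod using that insert.hyps(1) by (intro prod_zero) auto
  have ms: "poly m s \<noteq> 0" unfolding m_def poly_prod using insert.hyps by auto
  define c where "c = (v s - poly p s) / poly m s"
  have "s \<in> \<real>" using insert.prems by auto
  then have "c \<in> \<real>"
    unfolding c_def using insert.prems(2) poly_in_Reals[OF p(1)] poly_in_Reals[OF m]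
    by (auto intro!: Reals_divide Reals_diff)
  then have "real_poly (p + smult c m)" using p(1) m by (simp add: real_poly_add real_poly_smult)
  moreover have "poly (p + smult c m) t = v t" if "t \<in> insert s F" for t
    using that p(2) m0 ms unfolding c_def by auto
  ultimately show ?case by blast
qed (auto intro: exI[of _ 0])

context hilbert_space
begin

definition poly_op :: "complex poly \<Rightarrow> ('h \<Rightarrow> 'h) \<Rightarrow> ('h \<Rightarrow> 'h)" where
  "poly_op p T = (\<lambda>x. \<Sum>k<Suc (degree p). sc (coeff p k) ((T ^^ k) x))"

lemma poly_op_upto:
  assumes "degree p < n" shows "poly_op p T x = (\<Sum>k<n. sc (coeff p k) ((T ^^ k) x))"
proof -
  have "(\<Sum>k<n. sc (coeff p k) ((T ^^ k) x)) = (\<Sum>k<Suc (degree p). sc (coeff p k) ((T ^^ k) x))"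
    by (rule sum.mono_neutral_right) (use assms in \<open>auto simp: coeff_eq_0\<close>)
  then show ?thesis unfolding poly_op_def by simp
qed

lemma poly_op_0 [simp]: "poly_op 0 T = (\<lambda>x. 0)"
  unfolding poly_op_def by simp

lemma poly_op_const: "poly_op [:c:] T = (\<lambda>x. sc c x)"
  unfolding poly_op_def by simp

lemma poly_op_one: "poly_op 1 T x = x"
  unfolding one_pCons poly_op_const by simp

lemma poly_op_pCons:
  assumes l: "linear_op T" shows "poly_op (pCons a p) T x = sc a x + T (poly_op p T x)"
proof -
  define n where "n = Suc (degree p)"
  have "degree (pCons a p) < Suc n" using degree_pCons_le[of a p] unfolding n_def by simp
  then have "poly_op (pCons a p) T x = (\<Sum>k<Suc n. sc (coeff (pCons a p) k) ((T ^^ k) x))"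
    by (rule poly_op_upto)
  also have "\<dots> = sc a x + (\<Sum>k<n. sc (coeff p k) ((T ^^ Suc k) x))"
    by (subst sum.lessThan_Suc_shift) simp
  also have "\<dots> = sc a x + T (\<Sum>k<n. sc (coeff p k) ((T ^^ k) x))"
    by (simp add: linear_op_sum[OF l] linear_op_scale[OF l])
  finally show ?thesis unfolding poly_op_def n_def .
qed

lemma poly_op_add: "poly_op (p + q) T x = poly_op p T x + poly_op q T x"
proof -
  define n where "n = Suc (max (degree p) (degree q))"
  have "degree (p + q) < n" "degree p < n" "degree q < n"
    unfolding n_def using degree_add_le_max[of p q] by auto
  then show ?thesis by (simp add: poly_op_upto scale_add_left sum.distrib)
qed

lemma poly_op_diff: "poly_op (p - q) T x = poly_op p T x - poly_op q T x"
proof -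
  define n where "n = Suc (max (degree p) (degree q))"
  have "degree (p - q) < n" "degree p < n" "degree q < n"
    unfolding n_def using degree_diff_le_max[of p q] by auto
  then show ?thesis by (simp add: poly_op_upto scale_diff_left sum_subtractf)
qed

lemma poly_op_smult: "poly_op (smult c p) T x = sc c (poly_op p T x)"
proof -
  define n where "n = Suc (degree p)"
  have "degree (smult c p) < n" "degree p < n" unfolding n_def by auto
  then show ?thesis by (simp add: poly_op_upto scale_sum_right scale_scale)
qed

lemma poly_op_mult:
  assumes l: "linear_op T" shows "poly_op (p * q) T x = poly_op p T (poly_op q T x)"
proof (induction p arbitrary: x)
  case (pCons a p)
  have "poly_op (pCons a p * q) T x = poly_op (smult a q) T x + poly_op (pCons 0 (p * q)) T x"
    by (simp add: poly_op_add)
  then show ?case by (simp add: poly_op_smult poly_op_pCons[OF l] pCons.IH)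
qed simp

lemma poly_op_linear_factor: "linear_op T \<Longrightarrow> poly_op [:-z, 1:] T x = T x - sc z x"
  by (simp add: poly_op_pCons poly_op_const linear_op_zero scale_minus_left)

lemma linear_poly_op: "linear_op T \<Longrightarrow> linear_op (poly_op p T)"
proof (induction p)
  case (pCons a p)
  then show ?case
    unfolding linear_op_def poly_op_pCons[OF pCons.prems, abs_def]
    by (simp add: scale_add_right scale_scale mult.commute linear_op_add linear_op_scale)
qed (simp add: linear_op_const_zero)

lemma bops_poly_op: "T \<in> bops sc ip \<Longrightarrow> poly_op p T \<in> bops sc ip"
proof (induction p)
  case (pCons a p)
  have "poly_op (pCons a p) T = (\<lambda>x. sc a x + (T \<circ> poly_op p T) x)"
    by (simp add: poly_op_pCons[OF bops_linear[OF pCons.prems]] fun_eq_iff)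
  then show ?case using bops_add(1)[OF bops_scale_id bops_comp(1)[OF pCons.prems pCons.IH[OF pCons.prems]]]
    by simp
qed (simp add: bops_zero)

lemma poly_op_commute:
  assumes l: "linear_op T" and lS: "linear_op S" and c: "\<And>x. S (T x) = T (S x)"
  shows "S (poly_op p T x) = poly_op p T (S x)"
  by (induction p arbitrary: x)
     (simp_all add: linear_op_zero[OF lS] poly_op_pCons[OF l] linear_op_add[OF lS] linear_op_scale[OF lS] c)

lemma hermitian_poly_op:
  assumes T: "T \<in> bops sc ip" and h: "hermitian T" and p: "real_poly p"
  shows "hermitian (poly_op p T)"
  using p
proof (induction p)
  case (pCons a p)
  have l: "linear_op T" by (rule bops_linear[OF T])
  have a: "cnj a = a" and hp: "hermitian (poly_op p T)"
    using pCons.prems pCons.IH by (auto simp: real_poly_pCons Reals_cnj_iff)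
  have com: "T (poly_op p T y) = poly_op p T (T y)" for y
    by (rule poly_op_commute[OF l l]) simp
  show ?case unfolding hermitian_def poly_op_pCons[OF l]
    by (simp add: ip_add_left ip_add_right ip_scale_left ip_scale_right hermitianD[OF h]
        hermitianD[OF hp] com a)
qed (simp add: hermitian_def)

lemma invertible_poly_op:
  assumes T: "T \<in> bops sc ip" and p: "p \<noteq> 0"
    and roots: "\<And>z. poly p z = 0 \<Longrightarrow> invertible (\<lambda>x. T x - sc z x)"
  shows "invertible (poly_op p T)"
  using p roots
proof (induction "degree p" arbitrary: p rule: less_induct)
  case less
  have l: "linear_op T" by (rule bops_linear[OF T])
  show ?case
  proof (cases "degree p = 0")
    case True
    then obtain c where "p = [:c:]" "c \<noteq> 0" using less.prems by (metis degree_eq_zeroE pCons_0_0)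
    then show ?thesis using invertible_scale_id by (simp add: poly_op_const)
  next
    case False
    then have "\<not> constant (poly p)" by (simp add: constant_degree)
    then obtain z where z: "poly p z = 0" using fundamental_theorem_of_algebra by blast
    then obtain q where pq: "p = [:-z, 1:] * q" using poly_eq_0_iff_dvd by (metis dvdE)
    with less.prems(1) have q0: "q \<noteq> 0" by auto
    have "degree p = degree [:-z, 1:] + degree q"
      unfolding pq by (rule degree_mult_eq) (use q0 in auto)
    then have "degree q < degree p" by simp
    then have "invertible (poly_op q T)" using less q0 pq by simp
    moreover have "poly_op p T = (\<lambda>x. T x - sc z x) \<circ> poly_op q T"
      unfolding pq by (rule ext) (simp only: poly_op_mult[OF l] poly_op_linear_factor[OF l] comp_apply)
    ultimately show ?thesis using invertible_comp[OF less.prems(2)[OF z]] by simp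
  qed
qed

lemma not_in_spectrum_poly_op:
  assumes T: "T \<in> bops sc ip" and p: "p \<noteq> [:\<mu>:]"
    and avoid: "\<And>z. z \<in> op_spectrum sc ip T \<Longrightarrow> poly p z \<noteq> \<mu>"
  shows "\<mu> \<notin> op_spectrum sc ip (poly_op p T)"
proof -
  have "invertible (poly_op (p - [:\<mu>:]) T)"
  proof (rule invertible_poly_op[OF T])
    show "p - [:\<mu>:] \<noteq> 0" using p by simp
    show "invertible (\<lambda>x. T x - sc z x)" if "poly (p - [:\<mu>:]) z = 0" for z
      using that avoid in_spectrum_iff by fastforce
  qed
  moreover have "poly_op (p - [:\<mu>:]) T = (\<lambda>x. poly_op p T x - sc \<mu> x)"
    by (simp add: poly_op_diff poly_op_const fun_eq_iff)
  ultimately show ?thesis unfolding in_spectrum_iff by simp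
qed

text \<open>For self-adjoint \<open>T\<close> with finite spectrum \<open>\<sigma>\<close>, the polynomial \<open>m = \<Prod>s\<in>{0}\<union>\<sigma>. (X - s)\<close>
  annihilates \<open>T\<close>: by spectral mapping \<open>m(T)\<close> has no nonzero spectrum, but its norm
  lies in its spectrum. The factor \<open>X\<close> rules out the degenerate case where \<open>m\<close> is constant.\<close>
lemma poly_op_annihilating:
  assumes T: "T \<in> bops sc ip" and h: "hermitian T" and fin: "finite (op_spectrum sc ip T)"
  shows "poly_op (\<Prod>s\<in>insert 0 (op_spectrum sc ip T). [:-s, 1:]) T = (\<lambda>x. 0)"
proof (rule ccontr)
  define S where "S = insert 0 (op_spectrum sc ip T)"
  define m where "m = (\<Prod>s\<in>S. [:-s, 1:])"
  define n where "n = poly_op m T"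
  assume "\<not> ?thesis"
  then have nz: "n \<noteq> (\<lambda>x. 0)" unfolding n_def m_def S_def .
  have m0: "poly m s = 0" if "s \<in> S" for s
    unfolding m_def poly_prod using that fin by (intro prod_zero) (auto simp: S_def)
  have "S \<subseteq> \<real>" unfolding S_def using spectrum_hermitian_real[OF T h] by (auto simp: complex_is_Real_iff)
  then have "real_poly m" unfolding m_def by (intro real_poly_prod) (auto simp: real_poly_pCons)
  then have "hermitian n" unfolding n_def by (rule hermitian_poly_op[OF T h])
  have n: "n \<in> bops sc ip" unfolding n_def by (rule bops_poly_op[OF T])
  have "\<mu> \<notin> op_spectrum sc ip n" if "\<mu> \<noteq> 0" for \<mu>
    unfolding n_def
  proof (rule not_in_spectrum_poly_op[OF T])
    show "m \<noteq> [:\<mu>:]" using m0[of 0] that by (auto simp: S_def)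
    show "poly m z \<noteq> \<mu>" if "z \<in> op_spectrum sc ip T" for z
      using m0[of z] that \<open>\<mu> \<noteq> 0\<close> by (simp add: S_def)
  qed
  moreover have "opnorm ip n \<noteq> 0" using opnorm_eq_zero_iff[OF n] nz by simp
  ultimately show False using opnorm_in_spectrum[OF n \<open>hermitian n\<close> nz] by auto
qed

lemma poly_op_eq_if_eq_on_spectrum:
  assumes T: "T \<in> bops sc ip" and h: "hermitian T" and fin: "finite (op_spectrum sc ip T)"
    and eq: "\<And>s. s \<in> insert 0 (op_spectrum sc ip T) \<Longrightarrow> poly p s = poly q s"
  shows "poly_op p T x = poly_op q T x"
proof -
  have "(\<Prod>s\<in>insert 0 (op_spectrum sc ip T). [:-s, 1:]) dvd p - q"
    using fin eq by (intro prod_linear_factors_dvd) auto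
  then obtain r where "p - q = (\<Prod>s\<in>insert 0 (op_spectrum sc ip T). [:-s, 1:]) * r" by (rule dvdE)
  then have "poly_op (p - q) T x = 0"
    by (simp add: poly_op_mult[OF bops_linear[OF T]] poly_op_annihilating[OF T h fin])
  then show ?thesis by (simp add: poly_op_diff)
qed

lemma poly_op_square_nonneg:
  assumes T: "T \<in> bops sc ip" and h: "hermitian T" and r: "real_poly r"
  shows "0 \<le> Re (ip (poly_op (r * r) T z) z)"
  using hermitianD[OF hermitian_poly_op[OF T h r], of "poly_op r T z" z]
  by (simp add: poly_op_mult[OF bops_linear[OF T]] ip_self_nm)

text \<open>A polynomial that is nonnegative on the spectrum is the square of a real polynomial
  there, namely of an interpolant of its square root.\<close>
lemma poly_op_form_nonneg:
  assumes T: "T \<in> bops sc ip" and h: "hermitian T" and fin: "finite (op_spectrum sc ip T)"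
    and nonneg: "\<And>s. s \<in> insert 0 (op_spectrum sc ip T) \<Longrightarrow> poly p s \<in> \<real> \<and> 0 \<le> Re (poly p s)"
  shows "0 \<le> Re (ip (poly_op p T z) z)"
proof -
  define S where "S = insert 0 (op_spectrum sc ip T)"
  have "finite S" "S \<subseteq> \<real>"
    unfolding S_def using fin spectrum_hermitian_real[OF T h] by (auto simp: complex_is_Real_iff)
  then have "\<exists>r. real_poly r \<and> (\<forall>s\<in>S. poly r s = sqrt (Re (poly p s)))"
    by (rule real_poly_interpolation) auto
  then obtain r where r: "real_poly r" "\<And>s. s \<in> S \<Longrightarrow> poly r s = sqrt (Re (poly p s))" by blast
  have "poly_op p T z = poly_op (r * r) T z"
  proof (rule poly_op_eq_if_eq_on_spectrum[OF T h fin])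
    fix s assume s: "s \<in> insert 0 (op_spectrum sc ip T)"
    then show "poly p s = poly (r * r) s"
      using nonneg[OF s] r(2)[of s] unfolding S_def by (simp add: complex_eq_iff complex_is_Real_iff)
  qed
  then show ?thesis using poly_op_square_nonneg[OF T h r(1)] by simp
qed

text \<open>The spectral projection of \<open>T\<close> for the part of the spectrum above \<open>c\<close>, as a
  polynomial in \<open>T\<close> interpolating the indicator function.\<close>
lemma spectral_projection:
  assumes T: "T \<in> bops sc ip" and h: "hermitian T" and fin: "finite (op_spectrum sc ip T)"
    and c: "c \<ge> 0"
  obtains g where "poly g 0 = 0" "\<And>x. poly_op g T (poly_op g T x) = poly_op g T x"
    "\<And>z. poly_op g T z = z \<Longrightarrow> c * nm z ^ 2 \<le> Re (ip (T z) z)"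
    "\<And>z. poly_op g T z = 0 \<Longrightarrow> Re (ip (T z) z) \<le> c * nm z ^ 2"
proof -
  define S where "S = insert 0 (op_spectrum sc ip T)"
  have finS: "finite S" and SR: "S \<subseteq> \<real>" and real: "\<And>s. s \<in> S \<Longrightarrow> Im s = 0"
    unfolding S_def using fin spectrum_hermitian_real[OF T h] by (auto simp: complex_is_Real_iff)
  have l: "linear_op T" by (rule bops_linear[OF T])
  have "\<exists>g. real_poly g \<and> (\<forall>s\<in>S. poly g s = (if Re s > c then 1 else 0))"
    by (rule real_poly_interpolation[OF finS SR]) auto
  then obtain g where g: "\<And>s. s \<in> S \<Longrightarrow> poly g s = (if Re s > c then 1 else 0)" by blast
  let ?q = "poly_op g T"
  show ?thesis
  proof
    show "poly g 0 = 0" using g[of 0] c by (simp add: S_def)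
    show "?q (?q x) = ?q x" for x
      using poly_op_eq_if_eq_on_spectrum[OF T h fin, of "g * g" g x] g
      by (simp add: poly_op_mult[OF l] S_def)
    show "c * nm z ^ 2 \<le> Re (ip (T z) z)" if "?q z = z" for z
    proof -
      have "0 \<le> Re (ip (poly_op ([:- complex_of_real c, 1:] * g) T z) z)"
        by (rule poly_op_form_nonneg[OF T h fin]) (use g real in \<open>auto simp: S_def complex_is_Real_iff\<close>)
      moreover have "poly_op ([:- complex_of_real c, 1:] * g) T z = T z - sc c z"
        using that by (simp only: poly_op_mult[OF l] poly_op_linear_factor[OF l])
      ultimately show ?thesis by (simp add: ip_diff_left ip_scale_left ip_self_nm)
    qed
    show "Re (ip (T z) z) \<le> c * nm z ^ 2" if "?q z = 0" for z
    proof -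
      have "0 \<le> Re (ip (poly_op ([:c, -1:] * (1 - g)) T z) z)"
        by (rule poly_op_form_nonneg[OF T h fin]) (use g real in \<open>auto simp: S_def complex_is_Real_iff\<close>)
      moreover have "poly_op (1 - g) T z = z"
        using that by (simp add: poly_op_diff poly_op_one)
      then have "poly_op ([:c, -1:] * (1 - g)) T z = sc c z - T z"
        by (simp only: poly_op_mult[OF l])
          (simp add: poly_op_pCons[OF l] poly_op_const linear_op_minus[OF l] scale_minus_left)
      ultimately show ?thesis by (simp add: ip_diff_left ip_scale_left ip_self_nm)
    qed
  qed
qed

lemma commuting_idempotents_eq:
  assumes lp: "linear_op p" and lq: "linear_op q"
    and pp: "\<And>x. p (p x) = p x" and qq: "\<And>x. q (q x) = q x" and pq: "\<And>x. p (q x) = q (p x)"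
    and hi: "\<And>z. q z = z \<Longrightarrow> 1/2 * nm z ^ 2 \<le> Re (ip (b z) z)"
    and lo: "\<And>z. q z = 0 \<Longrightarrow> Re (ip (b z) z) \<le> 1/2 * nm z ^ 2"
    and close: "\<And>z. \<bar>Re (ip (b z - p z) z)\<bar> \<le> \<delta> * nm z ^ 2" and \<delta>: "\<delta> < 1/2"
  shows "p = q"
proof -
  have q_kills_ker_p: "q (y - p y) = 0" for y
  proof -
    define z where "z = q (y - p y)"
    have "q z = z" "p z = 0" unfolding z_def
      by (simp_all add: qq pq linear_op_diff[OF lp] linear_op_diff[OF lq] pp)
    then have "(1/2 - \<delta>) * nm z ^ 2 \<le> 0"
      using hi[of z] close[of z] by (simp add: algebra_simps)
    then show ?thesis using \<delta> unfolding z_def[symmetric] by (simp add: mult_le_0_iff)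
  qed
  have q_fixes_ran_p: "p y - q (p y) = 0" for y
  proof -
    define z where "z = p y - q (p y)"
    have "q z = 0" "p z = z" unfolding z_def
      by (simp_all add: qq pq pp linear_op_diff[OF lp] linear_op_diff[OF lq])
    moreover have "Re (ip (b z) z) = nm z ^ 2 + Re (ip (b z - p z) z)"
      using \<open>p z = z\<close> by (simp add: ip_diff_left nm_square)
    ultimately have "(1/2 - \<delta>) * nm z ^ 2 \<le> 0"
      using lo[of z] close[of z] by (simp add: algebra_simps)
    then show ?thesis using \<delta> unfolding z_def[symmetric] by (simp add: mult_le_0_iff)
  qed
  show "p = q"
  proof
    fix y
    have "q y = q (p y)" using q_kills_ker_p[of y] by (simp add: linear_op_diff[OF lq])
    then show "p y = q y" using q_fixes_ran_p[of y] by simp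
  qed
qed

end

locale star_algebra = hilbert_space sc ip
  for sc :: "complex \<Rightarrow> 'h::ab_group_add \<Rightarrow> 'h" and ip +
  fixes A :: "('h \<Rightarrow> 'h) set"
  assumes star_subalgebra: "star_subalgebra sc ip A"
begin

abbreviation Ahat :: "('h \<Rightarrow> 'h) set" where "Ahat \<equiv> norm_closure sc ip A"

lemma A_bops: "a \<in> A \<Longrightarrow> a \<in> bops sc ip"
  using star_subalgebra unfolding star_subalgebra_def by blast
lemma A_zero: "(\<lambda>x. 0) \<in> A"
  using star_subalgebra unfolding star_subalgebra_def by blast
lemma A_add: "a \<in> A \<Longrightarrow> b \<in> A \<Longrightarrow> (\<lambda>x. a x + b x) \<in> A"
  using star_subalgebra unfolding star_subalgebra_def by blast
lemma A_scale: "a \<in> A \<Longrightarrow> (\<lambda>x. sc c (a x)) \<in> A"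
  using star_subalgebra unfolding star_subalgebra_def by blast
lemma A_comp: "a \<in> A \<Longrightarrow> b \<in> A \<Longrightarrow> a \<circ> b \<in> A"
  using star_subalgebra unfolding star_subalgebra_def by blast
lemma A_adj: "a \<in> A \<Longrightarrow> adj ip a \<in> A"
  using star_subalgebra unfolding star_subalgebra_def by blast

lemma poly_op_in_A:
  assumes b: "b \<in> A" and p0: "poly p 0 = 0"
  shows "poly_op p b \<in> A"
proof -
  have l: "linear_op b" by (rule bops_linear[OF A_bops[OF b]])
  have comp_in_A: "b \<circ> poly_op p b \<in> A" for p
  proof (induction p)
    case (pCons a p)
    have "b \<circ> poly_op (pCons a p) b = (\<lambda>x. sc a (b x) + (b \<circ> (b \<circ> poly_op p b)) x)"
      by (simp add: poly_op_pCons[OF l] linear_op_add[OF l] linear_op_scale[OF l] fun_eq_iff)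
    then show ?case using A_add[OF A_scale[OF b] A_comp[OF b pCons.IH]] by simp
  qed (use A_zero linear_op_zero[OF l] in \<open>simp add: comp_def\<close>)
  obtain p' where "p = pCons 0 p'" using p0 by (cases p) (auto simp: poly_0_coeff_0)
  then have "poly_op p b = b \<circ> poly_op p' b" by (simp add: poly_op_pCons[OF l] fun_eq_iff)
  then show ?thesis using comp_in_A by simp
qed

lemma Ahat_bops: "T \<in> Ahat \<Longrightarrow> T \<in> bops sc ip"
  unfolding norm_closure_def by blast

lemma Ahat_approx: "T \<in> Ahat \<Longrightarrow> e > 0 \<Longrightarrow> \<exists>a\<in>A. opnorm ip (\<lambda>x. T x - a x) < e"
  unfolding norm_closure_def by blast

lemma AhatI:
  "T \<in> bops sc ip \<Longrightarrow> (\<And>e. e > 0 \<Longrightarrow> \<exists>a\<in>A. opnorm ip (\<lambda>x. T x - a x) < e) \<Longrightarrow> T \<in> Ahat"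
  unfolding norm_closure_def by blast

lemma A_subset_Ahat: "a \<in> A \<Longrightarrow> a \<in> Ahat"
  by (rule AhatI[OF A_bops]) (auto intro!: bexI[of _ a])

lemma Ahat_zero: "(\<lambda>x. 0) \<in> Ahat"
  by (rule A_subset_Ahat[OF A_zero])

lemma Ahat_add:
  assumes T: "T \<in> Ahat" and S: "S \<in> Ahat" shows "(\<lambda>x. T x + S x) \<in> Ahat"
proof (rule AhatI[OF bops_add(1)[OF Ahat_bops[OF T] Ahat_bops[OF S]]])
  fix e :: real assume "e > 0"
  then obtain a a' where a: "a \<in> A" "opnorm ip (\<lambda>x. T x - a x) < e/2"
    and a': "a' \<in> A" "opnorm ip (\<lambda>x. S x - a' x) < e/2"
    using Ahat_approx[OF T] Ahat_approx[OF S] half_gt_zero by metis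
  have "(\<lambda>x. T x + S x - (a x + a' x)) = (\<lambda>x. (T x - a x) + (S x - a' x))" by (simp add: algebra_simps)
  then have "opnorm ip (\<lambda>x. T x + S x - (a x + a' x)) < e"
    using bops_add(2)[OF bops_diff(1)[OF Ahat_bops[OF T] A_bops[OF a(1)]]
        bops_diff(1)[OF Ahat_bops[OF S] A_bops[OF a'(1)]]] a(2) a'(2)
    by simp
  then show "\<exists>b\<in>A. opnorm ip (\<lambda>x. T x + S x - b x) < e"
    using A_add[OF a(1) a'(1)] by (intro bexI[of _ "\<lambda>x. a x + a' x"]) auto
qed

lemma Ahat_scale:
  assumes T: "T \<in> Ahat" shows "(\<lambda>x. sc c (T x)) \<in> Ahat"
proof (rule AhatI[OF bops_scale(1)[OF Ahat_bops[OF T]]])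
  fix e :: real assume "e > 0"
  then have "e / (cmod c + 1) > 0" by (simp add: add_nonneg_pos)
  then obtain a where a: "a \<in> A" "opnorm ip (\<lambda>x. T x - a x) < e / (cmod c + 1)"
    using Ahat_approx[OF T] by blast
  have D: "(\<lambda>x. T x - a x) \<in> bops sc ip" by (rule bops_diff(1)[OF Ahat_bops[OF T] A_bops[OF a(1)]])
  have "opnorm ip (\<lambda>x. sc c (T x) - sc c (a x)) \<le> cmod c * opnorm ip (\<lambda>x. T x - a x)"
    using bops_scale(2)[OF D] by (simp add: scale_diff_right)
  also have "\<dots> \<le> cmod c * (e / (cmod c + 1))" using a(2) by (intro mult_left_mono) auto
  also have "\<dots> = e * (cmod c / (cmod c + 1))" by simp
  also have "\<dots> < e * 1"
    using \<open>e > 0\<close> by (intro mult_strict_left_mono) (auto simp: divide_less_eq_1 intro: add_nonneg_pos)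
  finally show "\<exists>b\<in>A. opnorm ip (\<lambda>x. sc c (T x) - b x) < e"
    using A_scale[OF a(1)] by (intro bexI[of _ "\<lambda>x. sc c (a x)"]) auto
qed

lemma Ahat_diff: "T \<in> Ahat \<Longrightarrow> S \<in> Ahat \<Longrightarrow> (\<lambda>x. T x - S x) \<in> Ahat"
  using Ahat_add[OF _ Ahat_scale, of T S "-1"] by (simp add: scale_minus_left)

lemma Ahat_adj:
  assumes T: "T \<in> Ahat" shows "adj ip T \<in> Ahat"
proof (rule AhatI[OF adj_bops(1)[OF Ahat_bops[OF T]]])
  fix e :: real assume "e > 0"
  then obtain a where a: "a \<in> A" "opnorm ip (\<lambda>x. T x - a x) < e" using Ahat_approx[OF T] by blast
  have "opnorm ip (\<lambda>x. adj ip T x - adj ip a x) \<le> opnorm ip (\<lambda>x. T x - a x)"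
    using adj_bops(2)[OF bops_diff(1)[OF Ahat_bops[OF T] A_bops[OF a(1)]]]
    by (simp add: adj_diff[OF Ahat_bops[OF T] A_bops[OF a(1)]])
  then show "\<exists>b\<in>A. opnorm ip (\<lambda>x. adj ip T x - b x) < e" using a A_adj[OF a(1)] by force
qed

lemma Ahat_comp:
  assumes T: "T \<in> Ahat" and S: "S \<in> Ahat" shows "T \<circ> S \<in> Ahat"
proof (rule AhatI[OF bops_comp(1)[OF Ahat_bops[OF T] Ahat_bops[OF S]]])
  have Tb: "T \<in> bops sc ip" and Sb: "S \<in> bops sc ip" using Ahat_bops T S by auto
  fix e :: real assume e: "e > 0"
  define K where "K = opnorm ip S + opnorm ip T + 1"
  have K: "K > 0" using opnorm_nonneg[OF Sb] opnorm_nonneg[OF Tb] unfolding K_def by auto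
  define d where "d = min 1 (e / (4 * K))"
  have d: "d > 0" "d \<le> 1" "2 * d * K < e" using e K unfolding d_def by (auto simp: field_simps min_def)
  obtain a a' where a: "a \<in> A" "opnorm ip (\<lambda>x. T x - a x) < d"
    and a': "a' \<in> A" "opnorm ip (\<lambda>x. S x - a' x) < d"
    using Ahat_approx[OF T d(1)] Ahat_approx[OF S d(1)] by blast
  have ab: "a \<in> bops sc ip" "a' \<in> bops sc ip" using A_bops a a' by auto
  have D: "(\<lambda>x. T x - a x) \<in> bops sc ip" "(\<lambda>x. S x - a' x) \<in> bops sc ip"
    using bops_diff(1) Tb Sb ab by auto
  have "opnorm ip a \<le> opnorm ip T + opnorm ip (\<lambda>x. T x - a x)"
    using bops_diff(2)[OF Tb D(1)] by simp
  then have na: "opnorm ip a \<le> K"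
    using a(2) d(2) opnorm_nonneg[OF Sb] unfolding K_def by linarith
  have "(\<lambda>x. (T \<circ> S) x - (a \<circ> a') x) = (\<lambda>x. ((\<lambda>x. T x - a x) \<circ> S) x + (a \<circ> (\<lambda>x. S x - a' x)) x)"
    by (simp add: fun_eq_iff linear_op_diff[OF bops_linear[OF ab(1)]])
  then have "opnorm ip (\<lambda>x. (T \<circ> S) x - (a \<circ> a') x)
      \<le> opnorm ip (\<lambda>x. T x - a x) * opnorm ip S + opnorm ip a * opnorm ip (\<lambda>x. S x - a' x)"
    using bops_add(2)[OF bops_comp(1)[OF D(1) Sb] bops_comp(1)[OF ab(1) D(2)]]
      bops_comp(2)[OF D(1) Sb] bops_comp(2)[OF ab(1) D(2)] by simp
  also have "\<dots> \<le> d * K + K * d"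
    using a(2) a'(2) na opnorm_nonneg[OF Sb] opnorm_nonneg[OF Tb] opnorm_nonneg[OF ab(1)]
      opnorm_nonneg[OF D(2)]
    by (intro add_mono mult_mono) (auto simp: K_def)
  finally show "\<exists>b\<in>A. opnorm ip (\<lambda>x. (T \<circ> S) x - b x) < e"
    using d(3) A_comp[OF a(1) a'(1)] by (intro bexI[of _ "a \<circ> a'"]) (auto simp: mult_ac)
qed

lemma hermitian_A_approx:
  assumes T: "T \<in> Ahat" "adj ip T = T" and e: "e > 0"
  obtains b where "b \<in> A" "adj ip b = b" "opnorm ip (\<lambda>x. T x - b x) < e"
proof -
  obtain a where a: "a \<in> A" "opnorm ip (\<lambda>x. T x - a x) < e" using Ahat_approx[OF T(1) e] by blast
  show ?thesis
  proof
    show "(\<lambda>x. sc (1/2) (a x + adj ip a x)) \<in> A" using A_scale[OF A_add[OF a(1) A_adj[OF a(1)]]] .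
    show "adj ip (\<lambda>x. sc (1/2) (a x + adj ip a x)) = (\<lambda>x. sc (1/2) (a x + adj ip a x))"
      using hermitian_part_approx(1)[OF Ahat_bops[OF T(1)] T(2) A_bops[OF a(1)]] .
    show "opnorm ip (\<lambda>x. T x - sc (1/2) (a x + adj ip a x)) < e"
      using hermitian_part_approx(2)[OF Ahat_bops[OF T(1)] T(2) A_bops[OF a(1)]] a(2) by simp
  qed
qed

lemma Ahat_commute_A:
  assumes comm: "commutative_ops A" and T: "T \<in> Ahat" and c: "c \<in> A"
  shows "T (c x) = c (T x)"
proof -
  have Tb: "T \<in> bops sc ip" and cb: "c \<in> bops sc ip" using Ahat_bops[OF T] A_bops[OF c] .
  have bound: "nm (T (c x) - c (T x)) \<le> e * (2 * opnorm ip c * nm x)" if e: "e > 0" for e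
  proof -
    obtain a where a: "a \<in> A" and ae: "opnorm ip (\<lambda>x. T x - a x) < e" using Ahat_approx[OF T e] by blast
    define D where "D = (\<lambda>x. T x - a x)"
    have D: "D \<in> bops sc ip" unfolding D_def by (rule bops_diff(1)[OF Tb A_bops[OF a]])
    have "a (c y) = c (a y)" for y using comm a c unfolding commutative_ops_def by (metis comp_apply)
    then have "T (c x) - c (T x) = D (c x) - c (D x)"
      unfolding D_def by (simp add: linear_op_diff[OF bops_linear[OF cb]])
    then have "nm (T (c x) - c (T x)) \<le> opnorm ip D * nm (c x) + opnorm ip c * nm (D x)"
      using nm_diff_le[of "D (c x)" "c (D x)"] opnorm_bound[OF D, of "c x"] opnorm_bound[OF cb, of "D x"]
      by simp
    also have "\<dots> \<le> e * (opnorm ip c * nm x) + opnorm ip c * (e * nm x)"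
      using ae opnorm_bound[OF cb, of x] opnorm_bound[OF D, of x] opnorm_nonneg[OF D] opnorm_nonneg[OF cb]
      unfolding D_def[symmetric]
      by (intro add_mono mult_mono) (auto intro: order_trans[OF _ mult_right_mono])
    finally show ?thesis by (simp add: algebra_simps)
  qed
  have "nm (T (c x) - c (T x)) \<le> 0"
  proof (rule field_le_epsilon)
    fix e :: real assume "e > 0"
    define K where "K = 2 * opnorm ip c * nm x + 1"
    have "0 \<le> 2 * opnorm ip c * nm x" using opnorm_nonneg[OF cb] by simp
    then have K: "K > 0" "2 * opnorm ip c * nm x \<le> K" unfolding K_def by linarith+
    have "nm (T (c x) - c (T x)) \<le> (e / K) * (2 * opnorm ip c * nm x)"
      using bound[of "e / K"] \<open>e > 0\<close> K(1) by simp
    also have "\<dots> \<le> (e / K) * K" using K \<open>e > 0\<close> by (intro mult_left_mono) auto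
    finally show "nm (T (c x) - c (T x)) \<le> 0 + e" using K by simp
  qed
  then show ?thesis by simp
qed

end

section \<open>Projections of the closure of a commutative R\<open>\<^sup>*\<close>-algebra\<close>

locale commutative_R_star_algebra = hilbert_space sc ip
  for sc :: "complex \<Rightarrow> 'h::ab_group_add \<Rightarrow> 'h" and ip +
  fixes A :: "('h \<Rightarrow> 'h) set"
  assumes R_star: "R_star_algebra sc ip A" and commutative: "commutative_ops A"

sublocale commutative_R_star_algebra \<subseteq> star_algebra
  using R_star by unfold_locales (simp add: R_star_algebra_def)

context commutative_R_star_algebra
begin

lemma finite_spectrum: "a \<in> A \<Longrightarrow> adj ip a = a \<Longrightarrow> finite (op_spectrum sc ip a)"
  using R_star unfolding R_star_algebra_def by blast

text \<open>A projection \<open>p\<close> of the closure is close to a self-adjoint \<open>b \<in> A\<close>; the spectral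
  projection of \<open>b\<close> for \<open>(1/2, \<infinity>)\<close> is a polynomial in \<open>b\<close> without constant term, hence in \<open>A\<close>,
  and it equals \<open>p\<close>.\<close>
theorem projection_in_A:
  assumes p: "p \<in> Ahat" and pp: "p \<circ> p = p" and sa: "adj ip p = p"
  shows "p \<in> A"
proof -
  obtain b where b: "b \<in> A" "adj ip b = b" and close: "opnorm ip (\<lambda>x. p x - b x) < 1/2"
    using hermitian_A_approx[OF p sa] by (metis half_gt_zero zero_less_one)
  have bb: "b \<in> bops sc ip" and hb: "hermitian b"
    using A_bops[OF b(1)] hermitian_iff_adj b(2) by auto
  obtain g where g0: "poly g 0 = 0" and gg: "\<And>x. poly_op g b (poly_op g b x) = poly_op g b x"
    and hi: "\<And>z. poly_op g b z = z \<Longrightarrow> 1/2 * nm z ^ 2 \<le> Re (ip (b z) z)"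
    and lo: "\<And>z. poly_op g b z = 0 \<Longrightarrow> Re (ip (b z) z) \<le> 1/2 * nm z ^ 2"
    using spectral_projection[OF bb hb finite_spectrum[OF b], of "1/2"] by auto
  have lp: "linear_op p" and lb: "linear_op b" using bops_linear Ahat_bops[OF p] bb by auto
  have "p = poly_op g b"
  proof (rule commuting_idempotents_eq[OF lp linear_poly_op[OF lb] _ gg _ hi lo _ close])
    show "p (p x) = p x" for x using fun_cong[OF pp, of x] by simp
    show "p (poly_op g b x) = poly_op g b (p x)" for x
      using poly_op_commute[OF lb lp Ahat_commute_A[OF commutative p b(1)]] .
    have "nm (b z - p z) \<le> opnorm ip (\<lambda>x. p x - b x) * nm z" for z
      using opnorm_bound[OF bops_diff(1)[OF bb Ahat_bops[OF p]]] opnorm_minus_commute[of b p] by metis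
    then show "\<bar>Re (ip (b z - p z) z)\<bar> \<le> opnorm ip (\<lambda>x. p x - b x) * nm z ^ 2" for z
      using abs_Re_ip_le[of "b z - p z" z] by (smt (verit) mult_right_mono nm_nonneg power2_eq_square mult.assoc)
  qed
  then show ?thesis using poly_op_in_A[OF b(1) g0] by simp
qed

corollary projections_Ahat_subset_A: "projections ip Ahat \<subseteq> A"
  using projection_in_A unfolding projections_def is_projection_def by blast

end

section \<open>Functions vanishing at infinity\<close>

lemma C0_continuous: "f \<in> C0 \<Longrightarrow> continuous_on UNIV f"
  unfolding C0_def by blast

lemma C0_compact: "f \<in> C0 \<Longrightarrow> e > 0 \<Longrightarrow> compact {x. norm (f x) \<ge> e}"
  unfolding C0_def by blast

lemma C0_if_support_compact:
  fixes f :: "'k::t2_space \<Rightarrow> complex"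
  assumes f: "continuous_on UNIV f" and K: "compact K" and supp: "\<And>t. f t \<noteq> 0 \<Longrightarrow> t \<in> K"
  shows "f \<in> C0"
  unfolding C0_def
proof (intro CollectI conjI allI impI f)
  fix e :: real assume "e > 0"
  then have "{x. e \<le> norm (f x)} = K \<inter> {x. e \<le> norm (f x)}" using supp by force
  moreover have "closed {x. e \<le> norm (f x)}"
    by (rule closed_Collect_le) (auto intro!: continuous_intros f)
  ultimately show "compact {x. e \<le> norm (f x)}" using K by (metis compact_Int_closed)
qed

lemma C0_dominated:
  fixes f g :: "'k::topological_space \<Rightarrow> complex"
  assumes f: "continuous_on UNIV f" and g: "g \<in> C0"
    and dom: "\<And>e. e > 0 \<Longrightarrow> \<exists>e'>0. \<forall>t. e \<le> cmod (f t) \<longrightarrow> e' \<le> cmod (g t)"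
  shows "f \<in> C0"
  unfolding C0_def
proof (intro CollectI conjI allI impI f)
  fix e :: real assume "e > 0"
  then obtain e' where e': "e' > 0" "\<And>t. e \<le> cmod (f t) \<Longrightarrow> e' \<le> cmod (g t)" using dom by blast
  have "{x. e \<le> norm (f x)} = {x. e' \<le> norm (g x)} \<inter> {x. e \<le> norm (f x)}" using e' by auto
  moreover have "closed {x. e \<le> norm (f x)}"
    by (rule closed_Collect_le) (auto intro!: continuous_intros f)
  ultimately show "compact {x. e \<le> norm (f x)}" using C0_compact[OF g e'(1)] by (metis compact_Int_closed)
qed

lemma C0_resolvent:
  fixes w :: "'k::topological_space \<Rightarrow> complex"
  assumes w: "w \<in> C0" and l: "l \<noteq> 0" and d: "d > 0" and far: "\<And>t. d \<le> cmod (w t - l)"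
  shows "(\<lambda>t. w t / (l * (w t - l))) \<in> C0"
proof (rule C0_dominated[OF _ w])
  have "w t - l \<noteq> 0" for t using far[of t] d by auto
  then show "continuous_on UNIV (\<lambda>t. w t / (l * (w t - l)))"
    using C0_continuous[OF w] l by (auto intro!: continuous_intros)
  fix e :: real assume e: "e > 0"
  have "e * (cmod l * d) \<le> cmod (w t)" if "e \<le> cmod (w t / (l * (w t - l)))" for t
  proof -
    have "cmod (w t / (l * (w t - l))) \<le> cmod (w t) / (cmod l * d)"
      using far[of t] l d by (simp add: norm_divide norm_mult frac_le mult_left_mono)
    then have "e \<le> cmod (w t) / (cmod l * d)" using that by linarith
    then show ?thesis using l d by (simp add: pos_le_divide_eq)
  qed
  then show "\<exists>e'>0. \<forall>t. e \<le> cmod (w t / (l * (w t - l))) \<longrightarrow> e' \<le> cmod (w t)"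
    using e l d by (intro exI[of _ "e * (cmod l * d)"]) auto
qed

definition cutoff :: "real \<Rightarrow> real \<Rightarrow> complex" where
  "cutoff a r = complex_of_real (max 0 (min 1 (a - r)))"

lemma cutoff_eq_one: "r \<le> a - 1 \<Longrightarrow> cutoff a r = 1"
  unfolding cutoff_def by simp

lemma cutoff_eq_zero: "a \<le> r \<Longrightarrow> cutoff a r = 0"
  unfolding cutoff_def by simp

lemma norm_cutoff_le: "cmod (cutoff a r) \<le> 1"
  unfolding cutoff_def by (simp add: max_def min_def)

lemma Im_cutoff [simp]: "Im (cutoff a r) = 0"
  unfolding cutoff_def by simp

lemma continuous_on_cutoff [continuous_intros]:
  "continuous_on S f \<Longrightarrow> continuous_on S (\<lambda>t. cutoff a (f t))"
  unfolding cutoff_def by (intro continuous_intros)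

lemma C0_cutoff:
  fixes u :: "'k::topological_space \<Rightarrow> complex"
  assumes u: "u \<in> C0" and e: "e > 0" and small: "a * e < cmod l"
  shows "(\<lambda>t. cutoff a (cmod (u t - l) / e)) \<in> C0"
proof (rule C0_dominated[OF _ u])
  show "continuous_on UNIV (\<lambda>t. cutoff a (cmod (u t - l) / e))"
    using C0_continuous[OF u] e by (intro continuous_intros) auto
  fix e' :: real assume "e' > 0"
  have "cmod l - a * e \<le> cmod (u t)" if "e' \<le> cmod (cutoff a (cmod (u t - l) / e))" for t
  proof -
    have "cmod (u t - l) / e < a"
      using that \<open>e' > 0\<close> cutoff_eq_zero[of a "cmod (u t - l) / e"] by (cases "a \<le> cmod (u t - l) / e") auto
    then have "cmod (u t - l) < a * e" using e by (simp add: field_simps)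
    then show ?thesis using norm_triangle_ineq2[of l "u t"] norm_minus_commute[of l] by simp
  qed
  then show "\<exists>e''>0. \<forall>t. e' \<le> cmod (cutoff a (cmod (u t - l) / e)) \<longrightarrow> e'' \<le> cmod (u t)"
    using small by (intro exI[of _ "cmod l - a * e"]) auto
qed

lemma indicator_in_C0:
  assumes "compact (U :: 'k::t2_space set)" "open U"
  shows "(indicator U :: 'k \<Rightarrow> complex) \<in> C0"
proof (rule C0_if_support_compact[OF _ assms(1)])
  have "indicator U -` B = (if 1 \<in> B then U else {}) \<union> (if 0 \<in> B then - U else {})" for B :: "complex set"
    by (auto simp: indicator_def of_bool_def split: if_splits)
  then show "continuous_on UNIV (indicator U :: 'k \<Rightarrow> complex)"
    unfolding continuous_on_open_vimage[OF open_UNIV]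
    using assms compact_imp_closed by auto
qed (auto simp: indicator_def)

lemma C0_idempotent_is_indicator:
  fixes f :: "'k::t2_space \<Rightarrow> complex"
  assumes f: "f \<in> C0" and idem: "\<And>t. f t * f t = f t"
  shows "f = indicator {t. f t = 1}" "compact {t. f t = 1}" "open {t. f t = 1}"
proof -
  have f01: "f t = 0 \<or> f t = 1" for t
    using idem[of t] by (metis mult_cancel_left2 mult_zero_right)
  then show "f = indicator {t. f t = 1}" by (auto simp: indicator_def fun_eq_iff)
  have "{t. f t = 1} = {t. 1/2 \<le> norm (f t)}" using f01 by force
  then show "compact {t. f t = 1}" using C0_compact[OF f, of "1/2"] by simp
  have "{t. f t = 1} = f -` ball 1 (1/2) \<inter> UNIV" using f01 by force
  then show "open {t. f t = 1}"
    using C0_continuous[OF f] continuous_on_open_vimage[OF open_UNIV] by (metis open_ball)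
qed

lemma C0_bump:
  fixes U :: "'k::t2_space set"
  assumes lc: "locally_compact_space (euclidean :: 'k topology)" and U: "open U" "x \<in> U"
  obtains \<phi> where "\<phi> \<in> C0" "\<phi> x = 1" "\<And>t. Im (\<phi> t) = 0" "\<And>t. \<phi> t \<noteq> 0 \<Longrightarrow> t \<in> U"
proof -
  have hs: "Hausdorff_space (euclidean :: 'k topology)"
    unfolding Hausdorff_space_def disjnt_def using hausdorff by fastforce
  have "neighbourhood_base_of (compactin euclidean) (euclidean :: 'k topology)"
    using locally_compact_space_neighbourhood_base[of euclidean] hs lc by blast
  then obtain V K where VK: "open V" "compact K" "x \<in> V" "V \<subseteq> K" "K \<subseteq> U"
    unfolding neighbourhood_base_of using U by (metis open_openin compactin_euclidean_iff)
  have cr: "completely_regular_space (euclidean :: 'k topology)"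
    using locally_compact_regular_imp_completely_regular_space[OF lc] hs by blast
  have "closedin euclidean (- V)" using VK(1) by (simp add: closed_closedin[symmetric] closed_Compl)
  moreover have "x \<in> topspace euclidean - (- V)" using VK(3) by simp
  ultimately obtain f :: "'k \<Rightarrow> real" where f: "continuous_map euclidean (top_of_set {0..1}) f"
    and fx: "f x = 0" and f1: "f ` (- V) \<subseteq> {1}"
    using cr unfolding completely_regular_space_def by metis
  have supp: "t \<in> K" if "complex_of_real (1 - f t) \<noteq> 0" for t using that f1 VK(4) by auto
  have "continuous_on UNIV f" using f by (simp add: continuous_map_in_subtopology)
  then have "(\<lambda>t. complex_of_real (1 - f t)) \<in> C0"
    by (intro C0_if_support_compact[OF _ VK(2) supp]) (auto intro!: continuous_intros)
  then show ?thesis using that[of "\<lambda>t. complex_of_real (1 - f t)"] fx supp VK(5) by auto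
qed

lemma clopen_if_finite_range:
  fixes g :: "'k::topological_space \<Rightarrow> complex"
  assumes g: "continuous_on UNIV g" and fin: "finite F" and range: "\<And>t. g t \<in> F"
  shows "open {t. c < Re (g t)}" "closed {t. c < Re (g t)}"
proof -
  show "open {t. c < Re (g t)}" by (rule open_Collect_less) (auto intro!: continuous_intros g)
  have "closed {s \<in> F. c < Re s}" using fin by (simp add: finite_imp_closed)
  then have "closed (g -` {s \<in> F. c < Re s} \<inter> UNIV)"
    using g unfolding continuous_on_closed_vimage[OF closed_UNIV] by blast
  moreover have "{t. c < Re (g t)} = g -` {s \<in> F. c < Re s} \<inter> UNIV" using range by auto
  ultimately show "closed {t. c < Re (g t)}" by simp
qed

context hilbert_space
begin

lemma invertible_if_resolvent:
  assumes W: "W \<in> bops sc ip" and R: "R \<in> bops sc ip" and l: "l \<noteq> 0"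
    and RW: "\<And>x. R (W x) = W (R x)" and res: "\<And>x. W (R x) - sc (1/l) (W x) - sc l (R x) = 0"
  shows "invertible (\<lambda>x. W x - sc l x)"
  unfolding invertible_def
proof (intro bexI conjI allI)
  have lW: "linear_op W" and lR: "linear_op R" using bops_linear W R by auto
  show "(\<lambda>x. R x - sc (1/l) x) \<in> bops sc ip" by (rule bops_diff(1)[OF R bops_scale_id])
  fix x
  have "W (R x - sc (1/l) x) - sc l (R x - sc (1/l) x) = (W (R x) - sc (1/l) (W x) - sc l (R x)) + x"
    using l by (simp add: linear_op_diff[OF lW] linear_op_scale[OF lW] scale_diff_right scale_scale)
  then show "W (R x - sc (1/l) x) - sc l (R x - sc (1/l) x) = x" using res[of x] by simp
  have "R (W x - sc l x) - sc (1/l) (W x - sc l x) = (W (R x) - sc (1/l) (W x) - sc l (R x)) + x"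
    using l by (simp add: linear_op_diff[OF lR] linear_op_scale[OF lR] RW scale_diff_right scale_scale)
  then show "R (W x - sc l x) - sc (1/l) (W x - sc l x) = x" using res[of x] by simp
qed

lemma eq_zero_if_absorbs_contraction:
  assumes H: "H \<in> bops sc ip" and K: "K \<in> bops sc ip" and HK: "H \<circ> K = H" and small: "opnorm ip K < 1"
  shows "H = (\<lambda>x. 0)"
proof -
  have "opnorm ip H \<le> opnorm ip H * opnorm ip K" using bops_comp(2)[OF H K] HK by simp
  then have "opnorm ip H * (1 - opnorm ip K) \<le> 0" by (simp add: algebra_simps)
  then have "opnorm ip H = 0" using small opnorm_nonneg[OF H] by (simp add: mult_le_0_iff)
  then show ?thesis using opnorm_eq_zero_iff[OF H] by simp
qed

end

section \<open>Representations of the closure as \<open>C\<^sub>0(K)\<close>\<close>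

locale C0_representation = star_algebra sc ip A
  for sc :: "complex \<Rightarrow> 'h::ab_group_add \<Rightarrow> 'h" and ip and A +
  fixes \<Phi> :: "('h \<Rightarrow> 'h) \<Rightarrow> ('k::t2_space \<Rightarrow> complex)"
  assumes star_iso: "star_iso_onto_C0 sc ip (norm_closure sc ip A) \<Phi>"
begin

lemma iso_bij: "bij_betw \<Phi> Ahat C0"
  using star_iso unfolding star_iso_onto_C0_def by blast
lemma iso_add: "T \<in> Ahat \<Longrightarrow> S \<in> Ahat \<Longrightarrow> \<Phi> (\<lambda>x. T x + S x) = (\<lambda>t. \<Phi> T t + \<Phi> S t)"
  using star_iso unfolding star_iso_onto_C0_def by blast
lemma iso_scale: "T \<in> Ahat \<Longrightarrow> \<Phi> (\<lambda>x. sc c (T x)) = (\<lambda>t. c * \<Phi> T t)"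
  using star_iso unfolding star_iso_onto_C0_def by blast
lemma iso_mult: "T \<in> Ahat \<Longrightarrow> S \<in> Ahat \<Longrightarrow> \<Phi> (T \<circ> S) = (\<lambda>t. \<Phi> T t * \<Phi> S t)"
  using star_iso unfolding star_iso_onto_C0_def by blast
lemma iso_adj: "T \<in> Ahat \<Longrightarrow> \<Phi> (adj ip T) = (\<lambda>t. cnj (\<Phi> T t))"
  using star_iso unfolding star_iso_onto_C0_def by blast

lemma iso_inj: "T \<in> Ahat \<Longrightarrow> S \<in> Ahat \<Longrightarrow> \<Phi> T = \<Phi> S \<Longrightarrow> T = S"
  using iso_bij unfolding bij_betw_def inj_on_def by blast
lemma iso_in_C0: "T \<in> Ahat \<Longrightarrow> \<Phi> T \<in> C0"
  using iso_bij unfolding bij_betw_def by blast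
lemma inv_iso_in_Ahat: "f \<in> C0 \<Longrightarrow> inv_into Ahat \<Phi> f \<in> Ahat"
  using iso_bij unfolding bij_betw_def by (metis inv_into_into)
lemma iso_inv_iso: "f \<in> C0 \<Longrightarrow> \<Phi> (inv_into Ahat \<Phi> f) = f"
  using iso_bij unfolding bij_betw_def by (metis f_inv_into_f)
lemma inv_iso_iso: "T \<in> Ahat \<Longrightarrow> inv_into Ahat \<Phi> (\<Phi> T) = T"
  using iso_bij unfolding bij_betw_def by (metis inv_into_f_f)

lemma iso_zero: "\<Phi> (\<lambda>x. 0) = (\<lambda>t. 0)"
  using iso_scale[OF Ahat_zero, of 0] by simp

lemma iso_diff: "T \<in> Ahat \<Longrightarrow> S \<in> Ahat \<Longrightarrow> \<Phi> (\<lambda>x. T x - S x) = (\<lambda>t. \<Phi> T t - \<Phi> S t)"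
  using iso_add[OF _ Ahat_scale, of T S "-1"] iso_scale[of S "-1"] by (simp add: scale_minus_left)

lemma iso_eq_zero: "T \<in> Ahat \<Longrightarrow> \<Phi> T = (\<lambda>t. 0) \<Longrightarrow> T = (\<lambda>x. 0)"
  using iso_inj[OF _ Ahat_zero] iso_zero by metis

lemma adj_eq_if_iso_real: "T \<in> Ahat \<Longrightarrow> (\<And>t. Im (\<Phi> T t) = 0) \<Longrightarrow> adj ip T = T"
  by (rule iso_inj[OF Ahat_adj]) (auto simp: iso_adj complex_eq_iff)

lemma iso_real_if_adj: "T \<in> Ahat \<Longrightarrow> adj ip T = T \<Longrightarrow> Im (\<Phi> T t) = 0"
  using iso_adj[of T] by (metis Reals_cnj_iff complex_is_Real_iff)

text \<open>\<open>C\<^sub>0(K)\<close> has no unit, so \<open>W - l\<close> is inverted through the function \<open>w/(l(w - l))\<close>,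
  which equals \<open>1/(w - l) + 1/l\<close> and vanishes at infinity.\<close>
lemma invertible_if_iso_avoids:
  assumes W: "W \<in> Ahat" and l: "l \<noteq> 0" and d: "d > 0" and far: "\<And>t. d \<le> cmod (\<Phi> W t - l)"
  shows "invertible (\<lambda>x. W x - sc l x)"
proof -
  define r where "r = (\<lambda>t. \<Phi> W t / (l * (\<Phi> W t - l)))"
  have "r \<in> C0" unfolding r_def by (rule C0_resolvent[OF iso_in_C0[OF W] l d far])
  then have R: "inv_into Ahat \<Phi> r \<in> Ahat" "\<Phi> (inv_into Ahat \<Phi> r) = r"
    using inv_iso_in_Ahat iso_inv_iso by auto
  define R where "R = inv_into Ahat \<Phi> r"
  have RW: "R \<circ> W = W \<circ> R"
    using R W unfolding R_def by (intro iso_inj Ahat_comp) (auto simp: iso_mult mult.commute)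
  have "(\<lambda>x. (W \<circ> R) x - sc (1/l) (W x) - sc l (R x)) = (\<lambda>x. 0)"
  proof (rule iso_eq_zero)
    show "(\<lambda>x. (W \<circ> R) x - sc (1/l) (W x) - sc l (R x)) \<in> Ahat"
      using R W unfolding R_def by (intro Ahat_diff Ahat_comp Ahat_scale)
    have "\<Phi> W t - l \<noteq> 0" for t using far[of t] d by auto
    moreover have "\<Phi> (\<lambda>x. (W \<circ> R) x - sc (1/l) (W x) - sc l (R x))
        = (\<lambda>t. \<Phi> W t * r t - 1/l * \<Phi> W t - l * r t)"
      using iso_diff[OF Ahat_diff[OF Ahat_comp[OF W R(1)] Ahat_scale[OF W]] Ahat_scale[OF R(1)]]
        iso_diff[OF Ahat_comp[OF W R(1)] Ahat_scale[OF W]] iso_mult[OF W R(1)] iso_scale[OF W]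
        iso_scale[OF R(1)] R(2)
      unfolding R_def by simp
    ultimately show "\<Phi> (\<lambda>x. (W \<circ> R) x - sc (1/l) (W x) - sc l (R x)) = (\<lambda>t. 0)"
      using l by (simp add: r_def field_simps)
  qed
  then show ?thesis
    using invertible_if_resolvent[OF Ahat_bops[OF W] Ahat_bops[OF R(1)] l] RW fun_cong
    unfolding R_def by (metis comp_apply)
qed

lemma opnorm_le_if_iso_le:
  assumes W: "W \<in> Ahat" and real: "\<And>t. Im (\<Phi> W t) = 0" and M: "\<And>t. cmod (\<Phi> W t) \<le> M"
  shows "opnorm ip W \<le> M"
proof (rule ccontr)
  have Wb: "W \<in> bops sc ip" by (rule Ahat_bops[OF W])
  assume "\<not> opnorm ip W \<le> M"
  moreover have "M \<ge> 0" using M[of undefined] norm_ge_zero order_trans by blast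
  ultimately have big: "opnorm ip W > M" "M \<ge> 0" by auto
  then have "W \<noteq> (\<lambda>x. 0)" by auto
  have notin: "complex_of_real s \<notin> op_spectrum sc ip W" if s: "\<bar>s\<bar> = opnorm ip W" for s
    unfolding in_spectrum_iff not_not
  proof (rule invertible_if_iso_avoids[OF W])
    show "complex_of_real s \<noteq> 0" "0 < opnorm ip W - M" using s big by auto
    show "opnorm ip W - M \<le> cmod (\<Phi> W t - complex_of_real s)" for t
      using s M[of t] norm_triangle_ineq2[of "complex_of_real s" "\<Phi> W t"]
      by (simp add: norm_minus_commute)
  qed
  moreover have "hermitian W" using adj_eq_if_iso_real[OF W real] hermitian_iff_adj[OF Wb] by simp
  ultimately show False
    using opnorm_in_spectrum[OF Wb _ \<open>W \<noteq> (\<lambda>x. 0)\<close>] opnorm_nonneg[OF Wb]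
      notin[of "opnorm ip W"] notin[of "- opnorm ip W"] by auto
qed

text \<open>\<open>H\<close> and \<open>K\<close> are the preimages of two nested bump functions of \<open>\<Phi> Y\<close> around the value
  \<open>\<Phi> Y t\<^sub>0\<close>.\<close>
lemma bump_operators:
  assumes Y: "Y \<in> Ahat" and real: "\<And>t. Im (\<Phi> Y t) = 0" and \<epsilon>: "\<epsilon> > 0" "3 * \<epsilon> < cmod (\<Phi> Y t0)"
  obtains H K where "H \<in> Ahat" "K \<in> Ahat" "H \<circ> K = H" "H \<noteq> (\<lambda>x. 0)"
    "opnorm ip (\<lambda>x. Y (K x) - sc (\<Phi> Y t0) (K x)) \<le> 3 * \<epsilon>"
proof -
  define u where "u = \<Phi> Y"
  define \<mu> where "\<mu> = u t0"
  define h where "h t = cutoff 2 (cmod (u t - \<mu>) / \<epsilon>)" for t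
  define k where "k t = cutoff 3 (cmod (u t - \<mu>) / \<epsilon>)" for t
  have "h \<in> C0" "k \<in> C0"
    using C0_cutoff[OF iso_in_C0[OF Y] \<epsilon>(1)] \<epsilon> unfolding h_def k_def u_def \<mu>_def by auto
  then have H: "inv_into Ahat \<Phi> h \<in> Ahat" "\<Phi> (inv_into Ahat \<Phi> h) = h"
    and K: "inv_into Ahat \<Phi> k \<in> Ahat" "\<Phi> (inv_into Ahat \<Phi> k) = k"
    using inv_iso_in_Ahat iso_inv_iso by auto
  show ?thesis
  proof
    show "inv_into Ahat \<Phi> h \<in> Ahat" "inv_into Ahat \<Phi> k \<in> Ahat" using H(1) K(1) .
    show "inv_into Ahat \<Phi> h \<circ> inv_into Ahat \<Phi> k = inv_into Ahat \<Phi> h"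
    proof (rule iso_inj[OF Ahat_comp[OF H(1) K(1)] H(1)])
      have "h t * k t = h t" for t
        unfolding h_def k_def by (cases "cmod (u t - \<mu>) / \<epsilon> < 2") (auto simp: cutoff_eq_one cutoff_eq_zero)
      then have "(\<lambda>t. h t * k t) = h" by (rule ext)
      then show "\<Phi> (inv_into Ahat \<Phi> h \<circ> inv_into Ahat \<Phi> k) = \<Phi> (inv_into Ahat \<Phi> h)"
        unfolding iso_mult[OF H(1) K(1)] H(2) K(2) .
    qed
    have "h t0 = 1" by (simp add: h_def \<mu>_def cutoff_eq_one)
    then show "inv_into Ahat \<Phi> h \<noteq> (\<lambda>x. 0)" using H(2) iso_zero by fastforce
    define G where "G = (\<lambda>x. (Y \<circ> inv_into Ahat \<Phi> k) x - sc \<mu> (inv_into Ahat \<Phi> k x))"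
    have G: "G \<in> Ahat" "\<Phi> G = (\<lambda>t. (u t - \<mu>) * k t)"
      unfolding G_def using Ahat_diff[OF Ahat_comp[OF Y K(1)] Ahat_scale[OF K(1)]]
        iso_diff[OF Ahat_comp[OF Y K(1)] Ahat_scale[OF K(1)]] iso_mult[OF Y K(1)] iso_scale[OF K(1)] K(2)
      by (simp_all add: u_def algebra_simps)
    have G_le: "cmod ((u t - \<mu>) * k t) \<le> 3 * \<epsilon>" for t
    proof (cases "cmod (u t - \<mu>) / \<epsilon> < 3")
      case True
      then have "cmod (u t - \<mu>) \<le> 3 * \<epsilon>" using \<epsilon>(1) by (simp add: field_simps)
      from mult_mono[OF this norm_cutoff_le] show ?thesis
        unfolding norm_mult k_def using \<epsilon>(1) by simp
    qed (use \<epsilon>(1) in \<open>simp add: k_def cutoff_eq_zero\<close>)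
    have G_real: "Im (\<Phi> G t) = 0" for t
      using real[of t] real[of t0] by (simp add: G(2) k_def \<mu>_def u_def)
    have "opnorm ip G \<le> 3 * \<epsilon>"
      by (rule opnorm_le_if_iso_le[OF G(1) G_real]) (simp add: G(2) G_le)
    then show "opnorm ip (\<lambda>x. Y (inv_into Ahat \<Phi> k x) - sc (\<Phi> Y t0) (inv_into Ahat \<Phi> k x)) \<le> 3 * \<epsilon>"
      unfolding G_def \<mu>_def u_def by simp
  qed
qed

lemma iso_value_in_spectrum:
  assumes Y: "Y \<in> Ahat" and real: "\<And>t. Im (\<Phi> Y t) = 0" and nz: "\<Phi> Y t0 \<noteq> 0"
  shows "\<Phi> Y t0 \<in> op_spectrum sc ip Y"
proof (rule ccontr)
  assume "\<Phi> Y t0 \<notin> op_spectrum sc ip Y"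
  then obtain Z where Z: "Z \<in> bops sc ip" "\<And>x. Z (Y x - sc (\<Phi> Y t0) x) = x"
    unfolding in_spectrum_iff invertible_def by blast
  define C where "C = opnorm ip Z"
  define \<epsilon> where "\<epsilon> = min (cmod (\<Phi> Y t0) / 4) (1 / (4 * (C + 1)))"
  have C: "C \<ge> 0" unfolding C_def by (rule opnorm_nonneg[OF Z(1)])
  have "\<epsilon> \<le> cmod (\<Phi> Y t0) / 4" "\<epsilon> > 0" using C nz unfolding \<epsilon>_def by auto
  then have \<epsilon>: "\<epsilon> > 0" "3 * \<epsilon> < cmod (\<Phi> Y t0)" by auto
  have "3 * \<epsilon> * C \<le> 3 * (1 / (4 * (C + 1))) * C"
    using C unfolding \<epsilon>_def by (intro mult_right_mono) auto
  also have "\<dots> < 1" using C by (simp add: field_simps)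
  finally have \<epsilon>C: "3 * \<epsilon> * C < 1" .
  obtain H K where H: "H \<in> Ahat" "H \<noteq> (\<lambda>x. 0)" and K: "K \<in> Ahat" "H \<circ> K = H"
    and YK: "opnorm ip (\<lambda>x. Y (K x) - sc (\<Phi> Y t0) (K x)) \<le> 3 * \<epsilon>"
    using bump_operators[OF Y real \<epsilon>] by metis
  have YK_bops: "(\<lambda>x. Y (K x) - sc (\<Phi> Y t0) (K x)) \<in> bops sc ip"
    using Ahat_bops[OF Ahat_diff[OF Ahat_comp[OF Y K(1)] Ahat_scale[OF K(1)]]] by (simp add: comp_def)
  have "nm (K x) \<le> (3 * \<epsilon> * C) * nm x" for x
  proof -
    have "nm (K x) \<le> C * nm (Y (K x) - sc (\<Phi> Y t0) (K x))"
      using opnorm_bound[OF Z(1)] Z(2)[of "K x"] unfolding C_def by metis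
    also have "\<dots> \<le> C * (3 * \<epsilon> * nm x)"
      using opnorm_bound[OF YK_bops, of x] mult_right_mono[OF YK nm_nonneg, of x] C
      by (intro mult_left_mono) auto
    finally show ?thesis by (simp add: mult_ac)
  qed
  then have "opnorm ip K \<le> 3 * \<epsilon> * C" using \<epsilon>(1) C by (intro opnorm_le) auto
  then have "opnorm ip K < 1" using \<epsilon>C by linarith
  then show False
    using eq_zero_if_absorbs_contraction[OF Ahat_bops[OF H(1)] Ahat_bops[OF K(1)] K(2)] H(2) by blast
qed

lemma norm_iso_le_opnorm:
  assumes T: "T \<in> Ahat" and real: "\<And>t. Im (\<Phi> T t) = 0"
  shows "cmod (\<Phi> T t) \<le> opnorm ip T"
  using spectrum_le_opnorm[OF Ahat_bops[OF T] iso_value_in_spectrum[OF T real]] opnorm_nonneg[OF Ahat_bops[OF T]]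
  by (cases "\<Phi> T t = 0") auto

end

locale commutative_R_star_C0_representation =
  commutative_R_star_algebra sc ip A + C0_representation sc ip A \<Phi>
  for sc :: "complex \<Rightarrow> 'h::ab_group_add \<Rightarrow> 'h" and ip A and \<Phi> :: "('h \<Rightarrow> 'h) \<Rightarrow> 'k::t2_space \<Rightarrow> complex"
begin

text \<open>Approximate a real bump function \<open>\<phi>\<close> at \<open>x\<close> within \<open>1/4\<close> by the image \<open>g\<close> of a
  self-adjoint element \<open>b\<close> of \<open>A\<close>. The nonzero values of \<open>g\<close> lie in the finite spectrum
  of \<open>b\<close>, so \<open>{g > 1/2}\<close> is a clopen neighbourhood of \<open>x\<close> inside the support of \<open>\<phi>\<close>.\<close>
lemma zero_dimensional:
  assumes lc: "locally_compact_space (euclidean :: 'k topology)"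
  shows "zero_dimensional_space TYPE('k)"
  unfolding zero_dimensional_space_def
proof (intro allI impI)
  fix U :: "'k set" and x assume U: "open U \<and> x \<in> U"
  then obtain \<phi> where \<phi>: "\<phi> \<in> C0" "\<phi> x = 1" "\<And>t. Im (\<phi> t) = 0" "\<And>t. \<phi> t \<noteq> 0 \<Longrightarrow> t \<in> U"
    using C0_bump[OF lc] by metis
  define T where "T = inv_into Ahat \<Phi> \<phi>"
  have T: "T \<in> Ahat" "\<Phi> T = \<phi>" using \<phi>(1) inv_iso_in_Ahat iso_inv_iso unfolding T_def by auto
  have "adj ip T = T" using adj_eq_if_iso_real[OF T(1)] \<phi>(3) T(2) by simp
  then obtain b where b: "b \<in> A" "adj ip b = b" "opnorm ip (\<lambda>x. T x - b x) < 1/4"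
    using hermitian_A_approx[OF T(1)] by (metis zero_less_divide_1_iff zero_less_numeral)
  define g where "g = \<Phi> b"
  have bA: "b \<in> Ahat" by (rule A_subset_Ahat[OF b(1)])
  have g: "\<And>t. Im (g t) = 0" unfolding g_def using iso_real_if_adj[OF bA b(2)] .
  have close: "cmod (\<phi> t - g t) < 1/4" for t
    using norm_iso_le_opnorm[OF Ahat_diff[OF T(1) bA], of t] b(3) \<phi>(3) g
    by (simp add: iso_diff[OF T(1) bA] T(2) g_def[symmetric])
  have "g t \<in> insert 0 (op_spectrum sc ip b)" for t
    using iso_value_in_spectrum[OF bA] g unfolding g_def by auto
  moreover have "continuous_on UNIV g" unfolding g_def by (rule C0_continuous[OF iso_in_C0[OF bA]])
  moreover have "finite (insert 0 (op_spectrum sc ip b))" using finite_spectrum[OF b(1,2)] by simp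
  ultimately have V: "open {t. 1/2 < Re (g t)}" "closed {t. 1/2 < Re (g t)}"
    using clopen_if_finite_range by blast+
  have "x \<in> {t. 1/2 < Re (g t)}"
    using close[of x] \<phi>(2) complex_Re_le_cmod[of "1 - g x"] by simp
  moreover have "{t. 1/2 < Re (g t)} \<subseteq> U"
  proof
    fix t assume "t \<in> {t. 1/2 < Re (g t)}"
    then have "0 < Re (\<phi> t)"
      using close[of t] complex_Re_le_cmod[of "g t - \<phi> t"] norm_minus_commute[of "g t"] by simp
    then show "t \<in> U" using \<phi>(4)[of t] by (cases "\<phi> t = 0") auto
  qed
  ultimately show "\<exists>V. open V \<and> closed V \<and> x \<in> V \<and> V \<subseteq> U" using V by blast
qed

lemma projection_of_compact_open:
  assumes "compact U" "open U"
  shows "\<Phi> (inv_into Ahat \<Phi> (indicator U)) = indicator U"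
    and "inv_into Ahat \<Phi> (indicator U) \<in> projections ip A"
proof -
  define P where "P = inv_into Ahat \<Phi> (indicator U)"
  have P: "P \<in> Ahat" "\<Phi> P = indicator U"
    using indicator_in_C0[OF assms] inv_iso_in_Ahat iso_inv_iso unfolding P_def by auto
  then show "\<Phi> (inv_into Ahat \<Phi> (indicator U)) = indicator U" unfolding P_def by simp
  have "P \<circ> P = P"
    by (rule iso_inj[OF Ahat_comp[OF P(1) P(1)] P(1)]) (simp add: iso_mult P indicator_inter_arith[symmetric])
  moreover have "adj ip P = P"
    by (rule adj_eq_if_iso_real[OF P(1)]) (simp add: P(2) indicator_def)
  ultimately have "P \<in> projections ip Ahat" using P(1) unfolding projections_def is_projection_def by blast
  then show "inv_into Ahat \<Phi> (indicator U) \<in> projections ip A"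
    using projections_Ahat_subset_A unfolding P_def projections_def by blast
qed

lemma indicator_eq_iff: "(indicator U :: 'a \<Rightarrow> complex) = indicator V \<longleftrightarrow> U = V"
  by (metis indicator_eq_1_iff set_eqI)

lemma bij_compact_open_projections:
  "bij_betw (\<lambda>U. inv_into Ahat \<Phi> (indicator U)) {U. compact U \<and> open U} (projections ip A)"
proof (rule bij_betw_imageI)
  show "inj_on (\<lambda>U. inv_into Ahat \<Phi> (indicator U)) {U. compact U \<and> open U}"
    using projection_of_compact_open(1) by (intro inj_onI) (metis indicator_eq_iff mem_Collect_eq)
  have "p \<in> (\<lambda>U. inv_into Ahat \<Phi> (indicator U)) ` {U. compact U \<and> open U}" if p: "p \<in> projections ip A" for p
  proof -
    have pA: "p \<in> Ahat" and pp: "p \<circ> p = p" and sa: "adj ip p = p"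
      using p A_subset_Ahat unfolding projections_def is_projection_def by auto
    have "\<Phi> p t * \<Phi> p t = \<Phi> p t" for t using iso_mult[OF pA pA] pp by metis
    note U = C0_idempotent_is_indicator[OF iso_in_C0[OF pA] this]
    then show ?thesis using inv_iso_iso[OF pA] by (metis (mono_tags, lifting) image_eqI mem_Collect_eq)
  qed
  then show "(\<lambda>U. inv_into Ahat \<Phi> (indicator U)) ` {U. compact U \<and> open U} = projections ip A"
    using projection_of_compact_open(2) by blast
qed

lemma subset_iff_proj_le:
  assumes U: "compact U" "open U" and V: "compact V" "open V"
  shows "U \<subseteq> V \<longleftrightarrow> proj_le (inv_into Ahat \<Phi> (indicator U)) (inv_into Ahat \<Phi> (indicator V))"
proof -
  define P Q where "P = inv_into Ahat \<Phi> (indicator U)" and "Q = inv_into Ahat \<Phi> (indicator V)"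
  have P: "P \<in> Ahat" "\<Phi> P = indicator U" and Q: "Q \<in> Ahat" "\<Phi> Q = indicator V"
    using projection_of_compact_open[OF U] projection_of_compact_open[OF V] A_subset_Ahat
    unfolding P_def Q_def projections_def by auto
  have "proj_le P Q \<longleftrightarrow> \<Phi> (P \<circ> Q) = \<Phi> P"
    unfolding proj_le_def using iso_inj[OF Ahat_comp[OF P(1) Q(1)] P(1)] by metis
  also have "\<dots> \<longleftrightarrow> U \<inter> V = U"
    by (simp add: iso_mult P Q indicator_inter_arith[symmetric] indicator_eq_iff)
  finally show ?thesis unfolding P_def Q_def by blast
qed

end

theorem proposition4p4:
  fixes sc :: "complex \<Rightarrow> 'h::ab_group_add \<Rightarrow> 'h"
    and ip :: "'h \<Rightarrow> 'h \<Rightarrow> complex"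
    and A :: "('h \<Rightarrow> 'h) set"
  assumes "complex_hilbert_space sc ip"
    and "R_star_algebra sc ip A"
    and "commutative_ops A"
  shows "projections ip (norm_closure sc ip A) \<subseteq> A \<and>
         (\<forall>\<Phi> :: ('h \<Rightarrow> 'h) \<Rightarrow> ('k::t2_space \<Rightarrow> complex).
           locally_compact_space (euclidean :: 'k topology) \<and>
           star_iso_onto_C0 sc ip (norm_closure sc ip A) \<Phi> \<longrightarrow>
           zero_dimensional_space TYPE('k) \<and>
           bij_betw (\<lambda>U. inv_into (norm_closure sc ip A) \<Phi> (indicator U))
                    {U :: 'k set. compact U \<and> open U} (projections ip A) \<and>
           (\<forall>U V. compact U \<and> open U \<and> compact V \<and> open V \<longrightarrow>
              (U \<subseteq> V \<longleftrightarrow> proj_le (inv_into (norm_closure sc ip A) \<Phi> (indicator U))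
                                     (inv_into (norm_closure sc ip A) \<Phi> (indicator V)))))"
proof -
  interpret commutative_R_star_algebra sc ip A
    using assms by unfold_locales
  show ?thesis
  proof (intro conjI allI impI)
    show "projections ip (norm_closure sc ip A) \<subseteq> A" by (rule projections_Ahat_subset_A)
    fix \<Phi> :: "('h \<Rightarrow> 'h) \<Rightarrow> ('k::t2_space \<Rightarrow> complex)"
    assume \<Phi>: "locally_compact_space (euclidean :: 'k topology) \<and>
      star_iso_onto_C0 sc ip (norm_closure sc ip A) \<Phi>"
    interpret commutative_R_star_C0_representation sc ip A \<Phi>
      using \<Phi> by unfold_locales blast
    show "zero_dimensional_space TYPE('k)" using \<Phi> zero_dimensional by blast
    show "bij_betw (\<lambda>U. inv_into (norm_closure sc ip A) \<Phi> (indicator U))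
        {U :: 'k set. compact U \<and> open U} (projections ip A)"
      by (rule bij_compact_open_projections)
    show "U \<subseteq> V \<longleftrightarrow> proj_le (inv_into (norm_closure sc ip A) \<Phi> (indicator U))
        (inv_into (norm_closure sc ip A) \<Phi> (indicator V))"
      if "compact U \<and> open U \<and> compact V \<and> open V" for U V :: "'k set"
      using subset_iff_proj_le that by blast
  qed
qed

end
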